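(* Let $\Omega\subseteq\mathbb{R}^n$ ($n\ge1$) be bounded and measurable, $Y$ a Hilbert space, $S:L^2(\Omega)\to Y$ linear and continuous, $u_a,u_b\in L^\infty(\Omega)$ with $U_{\text{ad}}:=\{u\in L^2(\Omega):u_a\le u\le u_b\text{ a.e.}\}\ne\emptyset$, $z\in Y$, and let $(\alpha_k)_{k\ge1}$ be a uniformly bounded sequence of positive reals. Let $u^\dagger$ be a solution of the problem $\min_{u\in U_{\text{ad}}}\frac12\|Su-z\|_Y^2$ satisfying the Active Set Condition (see context) with constant $\kappa>0$. Fix $\tau>0$ and let $k(\delta)$ be the a priori stopping index defined in the context. For each $\delta>0$ let $z^\delta\in Y$ with $\|z-z^\delta\|_Y\le\delta$ and let $(u_k^\delta)_k$ be the Bregman iteration sequence for data $z^\delta$. Then $$\min_{j=1,\dots,k(\delta)}\|u^\dagger-u_j^\delta\|_{L^2(\Omega)}\to0\quad\text{as }\delta\to0.$$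
   Context: Active Set Condition: with $p^\dagger:=S^\ast(z-Su^\dagger)$, there exist a set $I\subseteq\Omega$, $w\in Y$ and positive constants $\kappa,c$ such that (1) $I\supseteq\{x\in\Omega:p^\dagger(x)=0\}$ and $\chi_I u^\dagger=\chi_I P_{U_{\text{ad}}}(S^\ast w)$, where $P_{U_{\text{ad}}}$ is the pointwise projection onto $[u_a,u_b]$; (2) with $A:=\Omega\setminus I$, for all $\varepsilon>0$: $|\{x\in A:0<|p^\dagger(x)|<\varepsilon\}|\le c\,\varepsilon^\kappa$; (3) $S^\ast w\in L^\infty(\Omega)$. Bregman iteration with data $\zeta$: $J(u)=\frac12\|u\|^2+I_{U_{\text{ad}}}(u)$ ($I_{U_{\text{ad}}}$ the indicator function), $D^\lambda(u,v)=J(u)-J(v)-(u-v,\lambda)_{L^2}$ for $\lambda\in\partial J(v)$; $u_0=P_{U_{\text{ad}}}(0)$, $\lambda_0=0$; for $k\ge1$, $u_k$ is the minimizer of $\frac12\|Su-\zeta\|_Y^2+\alpha_kD^{\lambda_{k-1}}(u,u_{k-1})$, and $\lambda_k:=S^\ast\sum_{i=1}^k\frac1{\alpha_i}(\zeta-Su_i)$. Stopping index: $\gamma_k:=\sum_{j=1}^k\frac1{\alpha_j}$, $\gamma_0:=0$, $e_k^n:=\delta^2\sum_{i=1}^k(\alpha_i^{-2}+\gamma_{i-1}^2)$, $e_k^r:=1+\sum_{i=1}^k\alpha_i^{-1}\gamma_i^{-\kappa}$; $k(\delta):=0$ if $e_1^n>\tau e_1^r$, otherwise $k(\delta):=\max\{k\in\mathbb{N}: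 e_i^n\le\tau e_i^r\ \forall i\le k\}$. (For $\delta$ small, $k(\delta)\ge1$, so the minimum is over a nonempty set.) *)

theory Defs
  imports "HOL-Analysis.Analysis"
begin

text \<open>Elements are representatives; all quantities below only depend on them a.e.\<close>

definition L2 :: "'a::euclidean_space set \<Rightarrow> ('a \<Rightarrow> real) set" where
  "L2 \<Omega> = {u. u \<in> borel_measurable (lebesgue_on \<Omega>) \<and>
              integrable (lebesgue_on \<Omega>) (\<lambda>x. (u x)\<^sup>2)}"

definition l2inner :: "'a::euclidean_space set \<Rightarrow> ('a \<Rightarrow> real) \<Rightarrow> ('a \<Rightarrow> real) \<Rightarrow> real" where
  "l2inner \<Omega> u v = (\<integral>x. u x * v x \<partial>(lebesgue_on \<Omega>))"

definition l2norm :: "'a::euclidean_space set \<Rightarrow> ('a \<Rightarrow> real) \<Rightarrow> real" where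
  "l2norm \<Omega> u = sqrt (l2inner \<Omega> u u)"

definition Linf :: "'a::euclidean_space set \<Rightarrow> ('a \<Rightarrow> real) set" where
  "Linf \<Omega> = {u. u \<in> borel_measurable (lebesgue_on \<Omega>) \<and>
              (\<exists>C. AE x in lebesgue_on \<Omega>. \<bar>u x\<bar> \<le> C)}"

definition Uad :: "'a::euclidean_space set \<Rightarrow> ('a \<Rightarrow> real) \<Rightarrow> ('a \<Rightarrow> real) \<Rightarrow> ('a \<Rightarrow> real) set" where
  "Uad \<Omega> ua ub = {u \<in> L2 \<Omega>. AE x in lebesgue_on \<Omega>. ua x \<le> u x \<and> u x \<le> ub x}"

definition projUad :: "('a \<Rightarrow> real) \<Rightarrow> ('a \<Rightarrow> real) \<Rightarrow> ('a \<Rightarrow> real) \<Rightarrow> ('a \<Rightarrow> real)" where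
  "projUad ua ub v = (\<lambda>x. max (ua x) (min (ub x) (v x)))"

definition active_set_condition ::
  "'a::euclidean_space set \<Rightarrow> (('a \<Rightarrow> real) \<Rightarrow> 'y::real_inner) \<Rightarrow> ('y \<Rightarrow> 'a \<Rightarrow> real)
   \<Rightarrow> ('a \<Rightarrow> real) \<Rightarrow> ('a \<Rightarrow> real) \<Rightarrow> 'y \<Rightarrow> ('a \<Rightarrow> real) \<Rightarrow> real \<Rightarrow> bool" where
  "active_set_condition \<Omega> S Sadj ua ub z udag \<kappa> \<longleftrightarrow>
     (let p = Sadj (z - S udag) in
      \<exists>I w c. I \<in> sets lebesgue \<and> I \<subseteq> \<Omega> \<and> c > 0 \<and>
        {x \<in> \<Omega>. p x = 0} \<subseteq> I \<and>
        (AE x in lebesgue_on \<Omega>. x \<in> I \<longrightarrow> udag x = projUad ua ub (Sadj w) x) \<and>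
        (\<forall>\<epsilon>>0. measure lebesgue {x \<in> \<Omega> - I. 0 < \<bar>p x\<bar> \<and> \<bar>p x\<bar> < \<epsilon>} \<le> c * \<epsilon> powr \<kappa>) \<and>
        Sadj w \<in> Linf \<Omega>)"

definition breg_lambda ::
  "(('a \<Rightarrow> real) \<Rightarrow> 'y::real_normed_vector) \<Rightarrow> ('y \<Rightarrow> 'a \<Rightarrow> real) \<Rightarrow> (nat \<Rightarrow> real)
   \<Rightarrow> 'y \<Rightarrow> (nat \<Rightarrow> 'a \<Rightarrow> real) \<Rightarrow> nat \<Rightarrow> ('a \<Rightarrow> real)" where
  "breg_lambda S Sadj \<alpha> \<zeta> u k =
     (if k = 0 then (\<lambda>_. 0) else Sadj (\<Sum>i=1..k. (1 / \<alpha> i) *\<^sub>R (\<zeta> - S (u i))))"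

text \<open>Objective of step k (k >= 1), restricted to U_ad where J is finite:
  1/2 |Sv - zeta|^2 + alpha_k D^{lambda_(k-1)}(v, u_(k-1)).\<close>
definition breg_obj ::
  "'a::euclidean_space set \<Rightarrow> (('a \<Rightarrow> real) \<Rightarrow> 'y::real_normed_vector) \<Rightarrow> ('y \<Rightarrow> 'a \<Rightarrow> real)
   \<Rightarrow> (nat \<Rightarrow> real) \<Rightarrow> 'y \<Rightarrow> (nat \<Rightarrow> 'a \<Rightarrow> real) \<Rightarrow> nat \<Rightarrow> ('a \<Rightarrow> real) \<Rightarrow> real" where
  "breg_obj \<Omega> S Sadj \<alpha> \<zeta> u k v =
     (1/2) * (norm (S v - \<zeta>))\<^sup>2 +
     \<alpha> k * ((1/2) * (l2norm \<Omega> v)\<^sup>2 - (1/2) * (l2norm \<Omega> (u (k - 1)))\<^sup>2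
             - l2inner \<Omega> (\<lambda>x. v x - u (k - 1) x) (breg_lambda S Sadj \<alpha> \<zeta> u (k - 1)))"

definition bregman_seq ::
  "'a::euclidean_space set \<Rightarrow> (('a \<Rightarrow> real) \<Rightarrow> 'y::real_normed_vector) \<Rightarrow> ('y \<Rightarrow> 'a \<Rightarrow> real)
   \<Rightarrow> ('a \<Rightarrow> real) \<Rightarrow> ('a \<Rightarrow> real) \<Rightarrow> (nat \<Rightarrow> real) \<Rightarrow> 'y \<Rightarrow> (nat \<Rightarrow> 'a \<Rightarrow> real) \<Rightarrow> bool" where
  "bregman_seq \<Omega> S Sadj ua ub \<alpha> \<zeta> u \<longleftrightarrow>
     u 0 = projUad ua ub (\<lambda>_. 0) \<and>
     (\<forall>k\<ge>1. u k \<in> Uad \<Omega> ua ub \<and>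
        (\<forall>v \<in> Uad \<Omega> ua ub. breg_obj \<Omega> S Sadj \<alpha> \<zeta> u k (u k) \<le> breg_obj \<Omega> S Sadj \<alpha> \<zeta> u k v))"

definition gam :: "(nat \<Rightarrow> real) \<Rightarrow> nat \<Rightarrow> real" where
  "gam \<alpha> k = (\<Sum>j=1..k. 1 / \<alpha> j)"

definition e_noise :: "(nat \<Rightarrow> real) \<Rightarrow> real \<Rightarrow> nat \<Rightarrow> real" where
  "e_noise \<alpha> \<delta> k = \<delta>\<^sup>2 * (\<Sum>i=1..k. 1 / (\<alpha> i)\<^sup>2 + (gam \<alpha> (i - 1))\<^sup>2)"

definition e_reg :: "(nat \<Rightarrow> real) \<Rightarrow> real \<Rightarrow> nat \<Rightarrow> real" where
  "e_reg \<alpha> \<kappa> k = 1 + (\<Sum>i=1..k. (1 / \<alpha> i) * gam \<alpha> i powr (-\<kappa>))"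

definition kstop :: "(nat \<Rightarrow> real) \<Rightarrow> real \<Rightarrow> real \<Rightarrow> real \<Rightarrow> nat" where
  "kstop \<alpha> \<kappa> \<tau> \<delta> =
     (if e_noise \<alpha> \<delta> 1 > \<tau> * e_reg \<alpha> \<kappa> 1 then 0
      else (GREATEST k. \<forall>i\<in>{1..k}. e_noise \<alpha> \<delta> i \<le> \<tau> * e_reg \<alpha> \<kappa> i))"

end

theory Submission
  imports Defs
begin

text \<open>
  Each Bregman iterate satisfies the first-order condition
  \<open>(u\<^sub>k, v - u\<^sub>k) \<ge> (S (v - u\<^sub>k), \<mu>\<^sub>k)\<close> on \<open>U\<^sub>a\<^sub>d\<close>, where \<open>\<lambda>\<^sub>k = S\<^sup>* \<mu>\<^sub>k\<close>.
  Testing it with \<open>v = u\<^sup>\<dagger>\<close> and splitting \<open>\<mu>\<^sub>k = \<gamma>\<^sub>k (\<zeta> - z) + \<gamma>\<^sub>k (z - S u\<^sup>\<dagger>) - s\<^sub>k\<close> with the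
  accumulated image errors \<open>s\<^sub>k = \<Sum>\<^sub>i\<^sub>\<le>\<^sub>k (S u\<^sub>i - S u\<^sup>\<dagger>) / \<alpha>\<^sub>i\<close> leaves the term
  \<open>\<gamma>\<^sub>k (u\<^sub>k - u\<^sup>\<dagger>, p\<^sup>\<dagger>) - (u\<^sub>k - u\<^sup>\<dagger>, u\<^sup>\<dagger> - S\<^sup>* w)\<close>. On the set \<open>I\<close> both summands are
  nonpositive (sign condition of the optimal control and the projection formula); off \<open>I\<close>
  the integrand is positive only where \<open>|p\<^sup>\<dagger>| < G / \<gamma>\<^sub>k\<close>, a set of measure \<open>O(\<gamma>\<^sub>k\<^sup>-\<^sup>\<kappa>)\<close>.
  The remaining inner products telescope through \<open>1/2 \<parallel>s\<^sub>k + w\<parallel>\<^sup>2\<close>, so that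
  \<open>\<Sum>\<^sub>i\<^sub>\<le>\<^sub>k \<parallel>u\<^sup>\<dagger> - u\<^sub>i\<parallel>\<^sup>2 / \<alpha>\<^sub>i \<le> K e\<^sup>r\<^sub>k + e\<^sup>n\<^sub>k + 1/2 \<parallel>w\<parallel>\<^sup>2\<close>. At the stopping index the
  noise term is at most \<open>\<tau> e\<^sup>r\<^sub>k\<close>, hence the squared minimal error is \<open>O(e\<^sup>r\<^sub>k / \<gamma>\<^sub>k)\<close>, which
  tends to zero because \<open>k(\<delta>) \<rightarrow> \<infinity>\<close> and \<open>\<gamma>\<^sub>k \<rightarrow> \<infinity>\<close>.
\<close>

section \<open>Square integrable functions\<close>

lemma L2I:
  "u \<in> borel_measurable (lebesgue_on \<Omega>) \<Longrightarrow> integrable (lebesgue_on \<Omega>) (\<lambda>x. (u x)\<^sup>2)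
    \<Longrightarrow> u \<in> L2 \<Omega>"
  by (simp add: L2_def)

lemma L2_borel_measurable: "u \<in> L2 \<Omega> \<Longrightarrow> u \<in> borel_measurable (lebesgue_on \<Omega>)"
  by (simp add: L2_def)

lemma L2_integrable_square: "u \<in> L2 \<Omega> \<Longrightarrow> integrable (lebesgue_on \<Omega>) (\<lambda>x. (u x)\<^sup>2)"
  by (simp add: L2_def)

lemma L2_integrable_mult:
  assumes "u \<in> L2 \<Omega>" "v \<in> L2 \<Omega>"
  shows "integrable (lebesgue_on \<Omega>) (\<lambda>x. u x * v x)"
proof (rule Bochner_Integration.integrable_bound)
  show "integrable (lebesgue_on \<Omega>) (\<lambda>x. (u x)\<^sup>2 + (v x)\<^sup>2)"
    using assms by (intro Bochner_Integration.integrable_add L2_integrable_square)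
  show "(\<lambda>x. u x * v x) \<in> borel_measurable (lebesgue_on \<Omega>)"
    using assms L2_borel_measurable by measurable
  have "\<bar>a * b\<bar> \<le> a\<^sup>2 + b\<^sup>2" for a b :: real
  proof -
    have "2 * (\<bar>a\<bar> * \<bar>b\<bar>) \<le> a\<^sup>2 + b\<^sup>2"
      using sum_squares_bound[of "\<bar>a\<bar>" "\<bar>b\<bar>"] by (simp add: mult.assoc)
    moreover have "0 \<le> \<bar>a\<bar> * \<bar>b\<bar>" by simp
    ultimately have "\<bar>a\<bar> * \<bar>b\<bar> \<le> a\<^sup>2 + b\<^sup>2" by linarith
    then show ?thesis by (simp add: abs_mult)
  qed
  then show "AE x in lebesgue_on \<Omega>. norm (u x * v x) \<le> norm ((u x)\<^sup>2 + (v x)\<^sup>2)"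
    by (intro AE_I2) simp
qed

lemma L2_add:
  assumes "u \<in> L2 \<Omega>" "v \<in> L2 \<Omega>"
  shows "(\<lambda>x. u x + v x) \<in> L2 \<Omega>"
proof (rule L2I)
  show "(\<lambda>x. u x + v x) \<in> borel_measurable (lebesgue_on \<Omega>)"
    using assms L2_borel_measurable by measurable
  show "integrable (lebesgue_on \<Omega>) (\<lambda>x. (u x + v x)\<^sup>2)"
    unfolding power2_sum mult.assoc using assms
    by (intro Bochner_Integration.integrable_add L2_integrable_square integrable_mult_right
        L2_integrable_mult)
qed

lemma L2_cmult:
  assumes "u \<in> L2 \<Omega>"
  shows "(\<lambda>x. c * u x) \<in> L2 \<Omega>"
proof (rule L2I)
  show "(\<lambda>x. c * u x) \<in> borel_measurable (lebesgue_on \<Omega>)"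
    using assms L2_borel_measurable by measurable
  show "integrable (lebesgue_on \<Omega>) (\<lambda>x. (c * u x)\<^sup>2)"
    unfolding power_mult_distrib using assms by (intro integrable_mult_right L2_integrable_square)
qed

lemma L2_diff: "u \<in> L2 \<Omega> \<Longrightarrow> v \<in> L2 \<Omega> \<Longrightarrow> (\<lambda>x. u x - v x) \<in> L2 \<Omega>"
  using L2_add[of u \<Omega> "\<lambda>x. (-1) * v x"] L2_cmult[of v \<Omega> "-1"] by simp

lemma L2_zero: "(\<lambda>x. 0) \<in> L2 \<Omega>"
  by (rule L2I) auto

lemma L2_if:
  assumes "u \<in> L2 \<Omega>" "v \<in> L2 \<Omega>" and [measurable]: "Measurable.pred (lebesgue_on \<Omega>) Q"
  shows "(\<lambda>x. if Q x then u x else v x) \<in> L2 \<Omega>"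
proof (rule L2I)
  have [measurable]: "u \<in> borel_measurable (lebesgue_on \<Omega>)" "v \<in> borel_measurable (lebesgue_on \<Omega>)"
    using assms L2_borel_measurable by auto
  show "(\<lambda>x. if Q x then u x else v x) \<in> borel_measurable (lebesgue_on \<Omega>)"
    by measurable
  show "integrable (lebesgue_on \<Omega>) (\<lambda>x. (if Q x then u x else v x)\<^sup>2)"
  proof (rule Bochner_Integration.integrable_bound)
    show "integrable (lebesgue_on \<Omega>) (\<lambda>x. (u x)\<^sup>2 + (v x)\<^sup>2)"
      using assms by (intro Bochner_Integration.integrable_add L2_integrable_square)
    show "AE x in lebesgue_on \<Omega>. norm ((if Q x then u x else v x)\<^sup>2) \<le> norm ((u x)\<^sup>2 + (v x)\<^sup>2)"
      by (intro AE_I2) auto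
  qed measurable
qed

lemma L2_if_AE_bounded:
  assumes "\<Omega> \<in> lmeasurable" "u \<in> borel_measurable (lebesgue_on \<Omega>)"
    and "AE x in lebesgue_on \<Omega>. \<bar>u x\<bar> \<le> C"
  shows "u \<in> L2 \<Omega>"
proof (rule L2I[OF assms(2)])
  show "integrable (lebesgue_on \<Omega>) (\<lambda>x. (u x)\<^sup>2)"
  proof (rule finite_measure.integrable_const_bound[where B="C\<^sup>2"])
    show "finite_measure (lebesgue_on \<Omega>)"
      using assms(1) by (rule finite_measure_lebesgue_on)
    show "AE x in lebesgue_on \<Omega>. norm ((u x)\<^sup>2) \<le> C\<^sup>2"
      using assms(3) by (elim eventually_mono) (simp add: abs_le_square_iff[symmetric])
  qed (use assms in measurable)
qed

lemma Linf_subset_L2: "\<Omega> \<in> lmeasurable \<Longrightarrow> Linf \<Omega> \<subseteq> L2 \<Omega>"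
  unfolding Linf_def using L2_if_AE_bounded by blast

lemma l2inner_commute: "l2inner \<Omega> u v = l2inner \<Omega> v u"
  unfolding l2inner_def by (simp add: mult.commute)

lemma l2inner_zero_right: "l2inner \<Omega> u (\<lambda>x. 0) = 0"
  by (simp add: l2inner_def)

lemma l2inner_self_nonneg: "0 \<le> l2inner \<Omega> u u"
  unfolding l2inner_def by (rule Bochner_Integration.integral_nonneg) simp

lemma l2norm_nonneg: "0 \<le> l2norm \<Omega> u"
  unfolding l2norm_def using l2inner_self_nonneg by simp

lemma l2norm_power2: "(l2norm \<Omega> u)\<^sup>2 = l2inner \<Omega> u u"
  unfolding l2norm_def using l2inner_self_nonneg by simp

lemma l2inner_add_scaled_left:
  assumes "u \<in> L2 \<Omega>" "v \<in> L2 \<Omega>" "w \<in> L2 \<Omega>"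
  shows "l2inner \<Omega> (\<lambda>x. u x + t * v x) w = l2inner \<Omega> u w + t * l2inner \<Omega> v w"
proof -
  have "(\<lambda>x. (u x + t * v x) * w x) = (\<lambda>x. u x * w x + t * (v x * w x))"
    by (auto simp: algebra_simps)
  then show ?thesis
    unfolding l2inner_def using assms by (simp add: L2_integrable_mult)
qed

lemma l2inner_diff_left:
  "u \<in> L2 \<Omega> \<Longrightarrow> v \<in> L2 \<Omega> \<Longrightarrow> w \<in> L2 \<Omega>
    \<Longrightarrow> l2inner \<Omega> (\<lambda>x. u x - v x) w = l2inner \<Omega> u w - l2inner \<Omega> v w"
  using l2inner_add_scaled_left[of u \<Omega> v w "-1"] by simp

lemma l2inner_self_add_scaled:
  assumes "u \<in> L2 \<Omega>" "v \<in> L2 \<Omega>"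
  shows "l2inner \<Omega> (\<lambda>x. u x + t * v x) (\<lambda>x. u x + t * v x)
     = l2inner \<Omega> u u + 2 * t * l2inner \<Omega> u v + t\<^sup>2 * l2inner \<Omega> v v"
proof -
  have "(\<lambda>x. (u x + t * v x) * (u x + t * v x))
      = (\<lambda>x. u x * u x + ((2 * t) * (u x * v x) + t\<^sup>2 * (v x * v x)))"
    by (auto simp: algebra_simps power2_eq_square)
  then show ?thesis
    unfolding l2inner_def using assms by (simp add: L2_integrable_mult)
qed

lemma AE_eq_0_if_integral_nonpos:
  fixes f :: "'a \<Rightarrow> real"
  assumes "integrable M f" "\<And>x. 0 \<le> f x" "integral\<^sup>L M f \<le> 0"
  shows "AE x in M. f x = 0"
proof -
  have "0 \<le> integral\<^sup>L M f"
    using assms by (intro Bochner_Integration.integral_nonneg) auto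
  then have "integral\<^sup>L M f = 0" using assms by linarith
  then show ?thesis using integral_nonneg_eq_0_iff_AE[of M f] assms by auto
qed

lemma Uad_L2: "u \<in> Uad \<Omega> ua ub \<Longrightarrow> u \<in> L2 \<Omega>"
  by (simp add: Uad_def)

lemma Uad_AE_bounds: "u \<in> Uad \<Omega> ua ub \<Longrightarrow> AE x in lebesgue_on \<Omega>. ua x \<le> u x \<and> u x \<le> ub x"
  by (simp add: Uad_def)

lemma Uad_convex:
  assumes u: "u \<in> Uad \<Omega> ua ub" and v: "v \<in> Uad \<Omega> ua ub" and t: "0 \<le> t" "t \<le> 1"
  shows "(\<lambda>x. u x + t * (v x - u x)) \<in> Uad \<Omega> ua ub"
proof -
  have "(\<lambda>x. u x + t * (v x - u x)) \<in> L2 \<Omega>"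
    using u v by (intro L2_add L2_cmult L2_diff Uad_L2)
  moreover have "AE x in lebesgue_on \<Omega>. ua x \<le> u x + t * (v x - u x) \<and> u x + t * (v x - u x) \<le> ub x"
    using Uad_AE_bounds[OF u] Uad_AE_bounds[OF v]
  proof eventually_elim
    case (elim x)
    have "0 \<le> (1 - t) * (u x - ua x) + t * (v x - ua x)"
      and "0 \<le> (1 - t) * (ub x - u x) + t * (ub x - v x)"
      using elim t by simp_all
    then show ?case by (simp add: algebra_simps)
  qed
  ultimately show ?thesis by (simp add: Uad_def)
qed

lemma Uad_patch:
  assumes u: "u \<in> Uad \<Omega> ua ub" and v: "v \<in> L2 \<Omega>"
    and v_bounds: "AE x in lebesgue_on \<Omega>. ua x \<le> v x \<and> v x \<le> ub x"
    and Q: "Measurable.pred (lebesgue_on \<Omega>) Q"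
  shows "(\<lambda>x. if Q x then v x else u x) \<in> Uad \<Omega> ua ub"
proof -
  have "(\<lambda>x. if Q x then v x else u x) \<in> L2 \<Omega>"
    using L2_if[OF v Uad_L2[OF u] Q] .
  moreover have "AE x in lebesgue_on \<Omega>.
      ua x \<le> (if Q x then v x else u x) \<and> (if Q x then v x else u x) \<le> ub x"
    using Uad_AE_bounds[OF u] v_bounds by eventually_elim auto
  ultimately show ?thesis by (simp add: Uad_def)
qed

lemma nonneg_if_small_quadratic_nonneg:
  fixes A B :: real
  assumes h: "\<And>t. 0 < t \<Longrightarrow> t \<le> 1 \<Longrightarrow> 0 \<le> t * A + t\<^sup>2 * B" and B: "0 \<le> B"
  shows "0 \<le> A"
proof (rule ccontr)
  assume "\<not> 0 \<le> A"
  then have A: "A < 0" by simp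
  define t where "t = min 1 (- A / (2 * (B + 1)))"
  have "- A / (2 * (B + 1)) > 0"
    using A B by (intro divide_pos_pos) auto
  then have t: "0 < t" "t \<le> 1"
    by (auto simp: t_def)
  have "t * (2 * (B + 1)) \<le> - A"
    using B pos_le_divide_eq[of "2 * (B + 1)" t "- A"] by (simp add: t_def)
  moreover have "0 \<le> t * B"
    using t B by simp
  ultimately have "t * B < - A"
    using t by (simp add: algebra_simps)
  then have "t * (A + t * B) < 0"
    using t by (intro mult_pos_neg) auto
  then show False
    using h[OF t] by (simp add: power2_eq_square algebra_simps)
qed

lemma norm_add_scaleR_power2:
  fixes a b :: "'y::real_inner"
  shows "(norm (a + t *\<^sub>R b))\<^sup>2 = (norm a)\<^sup>2 + 2 * t * inner a b + t\<^sup>2 * (norm b)\<^sup>2"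
  unfolding power2_norm_eq_inner
  by (simp add: inner_add_left inner_add_right inner_commute power2_eq_square algebra_simps)

lemma projection_interval_ineq:
  fixes a b u s :: real
  assumes "a \<le> u" "u \<le> b"
  shows "0 \<le> (u - max a (min b s)) * (max a (min b s) - s)"
  using assms by (auto simp: max_def min_def mult_nonneg_nonneg mult_nonpos_nonpos)

text \<open>The pointwise form of the estimate off the set \<open>I\<close>: with \<open>e = u - u\<^sup>\<dagger>\<close> and
  \<open>g = u\<^sup>\<dagger> - S\<^sup>* w\<close>, a positive contribution is only possible where \<open>|p| < G / \<gamma>\<close>.\<close>

lemma sign_weighted_bound:
  fixes e p g \<gamma> G Mb :: real
  assumes "p * e \<le> 0" "\<bar>e\<bar> \<le> Mb" "\<bar>g\<bar> \<le> G" "\<gamma> > 0"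
  shows "\<gamma> * (e * p) - e * g \<le> (if \<bar>p\<bar> < G / \<gamma> then G * Mb else 0)"
proof -
  have eg: "- (e * g) \<le> \<bar>e\<bar> * \<bar>g\<bar>"
    by (simp add: abs_mult[symmetric])
  have "e * p \<le> 0"
    using assms(1) by (simp add: mult.commute)
  then have ep: "e * p = - (\<bar>e\<bar> * \<bar>p\<bar>)"
    by (simp add: abs_mult[symmetric] abs_of_nonpos)
  show ?thesis
  proof (cases "\<bar>p\<bar> < G / \<gamma>")
    case True
    have "\<bar>e\<bar> * \<bar>g\<bar> \<le> G * Mb"
      using assms by (subst mult.commute) (intro mult_mono, auto)
    moreover have "0 \<le> \<gamma> * (\<bar>e\<bar> * \<bar>p\<bar>)"
      using assms(4) by simp
    ultimately show ?thesis
      using True ep eg by simp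
  next
    case False
    then have "G \<le> \<gamma> * \<bar>p\<bar>"
      using assms(4) by (simp add: not_less pos_divide_le_eq mult.commute)
    then have "\<bar>e\<bar> * \<bar>g\<bar> \<le> \<bar>e\<bar> * (\<gamma> * \<bar>p\<bar>)"
      using assms(3) by (intro mult_left_mono) auto
    then show ?thesis
      using False ep eg by (simp add: algebra_simps)
  qed
qed

lemma active_set_AE_bound:
  fixes p u uz s ua ub :: "'a::euclidean_space \<Rightarrow> real"
  assumes sign: "AE x in lebesgue_on \<Omega>. p x * (u x - uz x) \<le> 0"
    and zeros: "{x\<in>\<Omega>. p x = 0} \<subseteq> I"
    and proj: "AE x in lebesgue_on \<Omega>. x \<in> I \<longrightarrow> uz x = projUad ua ub s x"
    and bounds: "AE x in lebesgue_on \<Omega>. ua x \<le> u x \<and> u x \<le> ub x"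
    and e_bdd: "AE x in lebesgue_on \<Omega>. \<bar>u x - uz x\<bar> \<le> Mb"
    and g_bdd: "AE x in lebesgue_on \<Omega>. \<bar>uz x - s x\<bar> \<le> G"
    and "G > 0" "Mb \<ge> 0" "\<gamma> > 0"
  shows "AE x in lebesgue_on \<Omega>. \<gamma> * ((u x - uz x) * p x) - (u x - uz x) * (uz x - s x)
    \<le> G * Mb * indicator {x \<in> \<Omega> - I. 0 < \<bar>p x\<bar> \<and> \<bar>p x\<bar> < G / \<gamma>} x"
  (is "AE x in _. _ \<le> G * Mb * indicator ?B x")
  using AE_space sign proj bounds e_bdd g_bdd
proof eventually_elim
  case (elim x)
  have sg: "p x * (u x - uz x) \<le> 0" using elim by auto
  show ?case
  proof (cases "x \<in> I")
    case True
    then have "0 \<le> (u x - uz x) * (uz x - s x)"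
      using elim projection_interval_ineq[of "ua x" "u x" "ub x" "s x"] by (simp add: projUad_def)
    moreover have "\<gamma> * ((u x - uz x) * p x) \<le> 0"
      using sg \<open>\<gamma> > 0\<close> by (simp add: mult.commute mult_nonneg_nonpos)
    moreover have "0 \<le> G * Mb * indicator ?B x"
      using \<open>G > 0\<close> \<open>Mb \<ge> 0\<close> by simp
    ultimately show ?thesis by linarith
  next
    case False
    then have "x \<in> \<Omega> - I" "p x \<noteq> 0" using elim zeros by (auto simp: space_restrict_space)
    then have "(if \<bar>p x\<bar> < G / \<gamma> then G * Mb else 0) \<le> G * Mb * indicator ?B x"
      using \<open>G > 0\<close> \<open>Mb \<ge> 0\<close> by auto
    moreover have "\<gamma> * ((u x - uz x) * p x) - (u x - uz x) * (uz x - s x)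
        \<le> (if \<bar>p x\<bar> < G / \<gamma> then G * Mb else 0)"
      using elim sg \<open>\<gamma> > 0\<close> by (intro sign_weighted_bound) auto
    ultimately show ?thesis by linarith
  qed
qed

lemma telescoping_step:
  fixes a b w \<eta> :: "'y::real_inner"
  assumes "norm \<eta> \<le> \<delta>"
  shows "inner (b - a) (g *\<^sub>R \<eta> - b - w)
     \<le> (1/2) * g\<^sup>2 * \<delta>\<^sup>2 + ((1/2) * (norm a)\<^sup>2 + inner w a) - ((1/2) * (norm b)\<^sup>2 + inner w b)"
proof -
  define d where "d = b - a"
  have b: "b = a + d" unfolding d_def by simp
  have "0 \<le> (norm (d - g *\<^sub>R \<eta>))\<^sup>2" by simp
  also have "(norm (d - g *\<^sub>R \<eta>))\<^sup>2 = (norm d)\<^sup>2 - 2 * g * inner d \<eta> + g\<^sup>2 * (norm \<eta>)\<^sup>2"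
    unfolding power2_norm_eq_inner
    by (simp add: inner_diff_left inner_diff_right inner_commute power2_eq_square algebra_simps)
  finally have young: "g * inner d \<eta> \<le> (1/2) * (norm d)\<^sup>2 + (1/2) * g\<^sup>2 * (norm \<eta>)\<^sup>2"
    by simp
  have "g\<^sup>2 * (norm \<eta>)\<^sup>2 \<le> g\<^sup>2 * \<delta>\<^sup>2"
    using assms by (intro mult_left_mono power_mono) auto
  moreover have "(norm b)\<^sup>2 = (norm a)\<^sup>2 + 2 * inner a d + (norm d)\<^sup>2"
    unfolding b power2_norm_eq_inner by (simp add: inner_add_left inner_add_right inner_commute)
  moreover have "inner (b - a) (g *\<^sub>R \<eta> - b - w) = g * inner d \<eta> - inner d a - (norm d)\<^sup>2 - inner d w"
    unfolding d_def[symmetric] b power2_norm_eq_inner by (simp add: inner_diff_right inner_add_right)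
  moreover have "inner d w = inner w b - inner w a"
    unfolding b by (simp add: inner_add_right inner_commute)
  ultimately show ?thesis
    using young by (simp add: inner_commute algebra_simps)
qed

text \<open>The potential \<open>1/2 \<parallel>s\<parallel>\<^sup>2 + (w, s) \<ge> -1/2 \<parallel>w\<parallel>\<^sup>2\<close> absorbs the telescoped inner products.\<close>

lemma telescoping_sum:
  fixes s :: "nat \<Rightarrow> 'y::real_inner" and w \<eta> :: 'y
  assumes step: "\<And>i. i \<ge> 1 \<Longrightarrow> a i \<le> b i + inner (s i - s (i - 1)) (g i *\<^sub>R \<eta> - s i - w)"
    and "s 0 = 0" and \<eta>: "norm \<eta> \<le> \<delta>"
  shows "(\<Sum>i=1..k. a i)
    \<le> (\<Sum>i=1..k. b i) + (1/2) * \<delta>\<^sup>2 * (\<Sum>i=1..k. (g i)\<^sup>2) + (1/2) * (norm w)\<^sup>2"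
proof -
  define \<Phi> where "\<Phi> x = (1/2) * (norm x)\<^sup>2 + inner w x" for x
  have partial: "(\<Sum>i=1..k. a i) \<le> (\<Sum>i=1..k. b i) + (1/2) * \<delta>\<^sup>2 * (\<Sum>i=1..k. (g i)\<^sup>2) - \<Phi> (s k)"
    for k
  proof (induction k)
    case 0
    then show ?case by (simp add: \<Phi>_def \<open>s 0 = 0\<close>)
  next
    case (Suc k)
    have "a (Suc k) \<le> b (Suc k) + inner (s (Suc k) - s k) (g (Suc k) *\<^sub>R \<eta> - s (Suc k) - w)"
      using step[of "Suc k"] by simp
    also have "inner (s (Suc k) - s k) (g (Suc k) *\<^sub>R \<eta> - s (Suc k) - w)
        \<le> (1/2) * (g (Suc k))\<^sup>2 * \<delta>\<^sup>2 + \<Phi> (s k) - \<Phi> (s (Suc k))"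
      unfolding \<Phi>_def using telescoping_step[OF \<eta>] by simp
    finally show ?case using Suc.IH by (simp add: algebra_simps)
  qed
  have "0 \<le> (1/2) * (norm (s k + w))\<^sup>2" by simp
  also have "(norm (s k + w))\<^sup>2 = (norm (s k))\<^sup>2 + 2 * inner w (s k) + (norm w)\<^sup>2"
    unfolding power2_norm_eq_inner by (simp add: inner_add_left inner_add_right inner_commute)
  finally have "- \<Phi> (s k) \<le> (1/2) * (norm w)\<^sup>2" unfolding \<Phi>_def by simp
  then show ?thesis using partial[of k] by simp
qed

section \<open>The weights \<open>\<gamma>\<^sub>k\<close> and the stopping index\<close>

lemma gam_Suc: "gam \<alpha> (Suc k) = gam \<alpha> k + 1 / \<alpha> (Suc k)"
  by (simp add: gam_def)

lemma gam_mono: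
  assumes "\<And>k. k \<ge> 1 \<Longrightarrow> \<alpha> k > 0" and "j \<le> k"
  shows "gam \<alpha> j \<le> gam \<alpha> k"
  unfolding gam_def using assms by (intro sum_mono2) (auto intro: less_imp_le)

lemma gam_pos:
  assumes "\<And>k. k \<ge> 1 \<Longrightarrow> \<alpha> k > 0" and "k \<ge> 1"
  shows "gam \<alpha> k > 0"
proof -
  have "gam \<alpha> 1 \<le> gam \<alpha> k" using assms by (intro gam_mono) auto
  moreover have "0 < gam \<alpha> 1" using assms(1)[of 1] by (simp add: gam_def)
  ultimately show ?thesis by linarith
qed

lemma gam_power2_le:
  assumes "k \<ge> 1"
  shows "(gam \<alpha> k)\<^sup>2 \<le> 2 * (1 / (\<alpha> k)\<^sup>2 + (gam \<alpha> (k - 1))\<^sup>2)"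
proof -
  obtain m where k: "k = Suc m" using assms by (cases k) auto
  have "0 \<le> (gam \<alpha> m - 1 / \<alpha> k)\<^sup>2" by simp
  then show ?thesis
    unfolding k gam_Suc by (simp add: power2_sum power2_diff power_one_over)
qed

lemma gam_at_top:
  assumes pos: "\<And>k. k \<ge> 1 \<Longrightarrow> \<alpha> k > 0" and bdd: "\<And>k. k \<ge> 1 \<Longrightarrow> \<alpha> k \<le> C"
  shows "filterlim (gam \<alpha>) at_top at_top"
proof -
  have C: "C > 0" using pos[of 1] bdd[of 1] by simp
  have lower: "real k * (1 / C) \<le> gam \<alpha> k" for k
  proof -
    have "(\<Sum>j=1..k. 1 / C) \<le> gam \<alpha> k"
      unfolding gam_def using pos bdd C by (intro sum_mono) (auto intro!: divide_left_mono)
    then show ?thesis by simp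
  qed
  have "filterlim (\<lambda>k. real k * (1 / C)) at_top at_top"
    using C by (intro filterlim_at_top_mult_tendsto_pos[OF tendsto_const] filterlim_real_sequentially) simp
  then show ?thesis
    by (rule filterlim_at_top_mono) (use lower in auto)
qed

lemma e_reg_ge_1:
  assumes "\<And>k. k \<ge> 1 \<Longrightarrow> \<alpha> k > 0"
  shows "1 \<le> e_reg \<alpha> \<kappa> k"
  unfolding e_reg_def
proof (intro add_increasing2 sum_nonneg)
  fix i assume "i \<in> {1..k}"
  then show "0 \<le> 1 / \<alpha> i * gam \<alpha> i powr - \<kappa>" using assms[of i] by simp
qed simp

lemma e_reg_le_tail_bound:
  assumes pos: "\<And>k. k \<ge> 1 \<Longrightarrow> \<alpha> k > 0" and "N \<le> k" and "0 \<le> \<epsilon>"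
    and small: "\<And>i. N < i \<Longrightarrow> gam \<alpha> i powr (-\<kappa>) \<le> \<epsilon>"
  shows "e_reg \<alpha> \<kappa> k \<le> e_reg \<alpha> \<kappa> N + \<epsilon> * gam \<alpha> k"
proof -
  obtain p where k: "k = N + p" using \<open>N \<le> k\<close> le_Suc_ex by blast
  define f where "f i = 1 / \<alpha> i * gam \<alpha> i powr (-\<kappa>)" for i
  have "(\<Sum>i=N+1..N+p. f i) \<le> (\<Sum>i=N+1..N+p. \<epsilon> * (1 / \<alpha> i))"
  proof (rule sum_mono)
    fix i assume "i \<in> {N+1..N+p}"
    then show "f i \<le> \<epsilon> * (1 / \<alpha> i)"
      unfolding f_def using pos[of i] small[of i] by (simp add: divide_right_mono)
  qed
  also have "\<dots> \<le> \<epsilon> * gam \<alpha> k"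
  proof -
    have "(\<Sum>i=N+1..N+p. 1 / \<alpha> i) \<le> (\<Sum>i=1..N+p. 1 / \<alpha> i)"
      using pos by (intro sum_mono2) (auto intro: less_imp_le)
    then show ?thesis
      unfolding gam_def sum_distrib_left[symmetric] k using \<open>0 \<le> \<epsilon>\<close> by (rule mult_left_mono)
  qed
  moreover have "e_reg \<alpha> \<kappa> k = e_reg \<alpha> \<kappa> N + (\<Sum>i=N+1..N+p. f i)"
    unfolding e_reg_def f_def[symmetric] k using sum.ub_add_nat[of 1 N f p] by simp
  ultimately show ?thesis by linarith
qed

lemma e_reg_over_gam_tendsto_0:
  assumes pos: "\<And>k. k \<ge> 1 \<Longrightarrow> \<alpha> k > 0" and bdd: "\<And>k. k \<ge> 1 \<Longrightarrow> \<alpha> k \<le> C"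
    and "\<kappa> > 0"
  shows "((\<lambda>k. e_reg \<alpha> \<kappa> k / gam \<alpha> k) \<longlongrightarrow> 0) at_top"
proof (rule tendstoI)
  fix \<epsilon> :: real assume "\<epsilon> > 0"
  have gam: "filterlim (gam \<alpha>) at_top at_top" using pos bdd by (rule gam_at_top)
  then have "((\<lambda>k. gam \<alpha> k powr (-\<kappa>)) \<longlongrightarrow> 0) at_top"
    using \<open>\<kappa> > 0\<close> by (intro tendsto_neg_powr) auto
  then have "\<forall>\<^sub>F k in at_top. gam \<alpha> k powr (-\<kappa>) < \<epsilon> / 2"
    using \<open>\<epsilon> > 0\<close> by (intro order_tendstoD(2)) auto
  then obtain N where N: "\<And>k. k \<ge> N \<Longrightarrow> gam \<alpha> k powr (-\<kappa>) < \<epsilon> / 2"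
    by (auto simp: eventually_at_top_linorder)
  have "((\<lambda>k. e_reg \<alpha> \<kappa> N / gam \<alpha> k) \<longlongrightarrow> 0) at_top"
    using gam by (intro tendsto_divide_0[OF tendsto_const] filterlim_at_top_imp_at_infinity)
  then have "\<forall>\<^sub>F k in at_top. e_reg \<alpha> \<kappa> N / gam \<alpha> k < \<epsilon> / 2"
    using \<open>\<epsilon> > 0\<close> by (intro order_tendstoD(2)) auto
  moreover have "\<forall>\<^sub>F k in at_top. k \<ge> max N 1" by (rule eventually_ge_at_top)
  ultimately show "\<forall>\<^sub>F k in at_top. dist (e_reg \<alpha> \<kappa> k / gam \<alpha> k) 0 < \<epsilon>"
  proof eventually_elim
    case (elim k)
    have gam_k: "gam \<alpha> k > 0" using pos elim by (intro gam_pos) auto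
    have "\<And>i. N < i \<Longrightarrow> gam \<alpha> i powr (-\<kappa>) \<le> \<epsilon> / 2"
      using N by (simp add: less_imp_le)
    then have "e_reg \<alpha> \<kappa> k \<le> e_reg \<alpha> \<kappa> N + \<epsilon> / 2 * gam \<alpha> k"
      using e_reg_le_tail_bound[where \<alpha>=\<alpha>, OF pos, of N k "\<epsilon> / 2"] elim \<open>\<epsilon> > 0\<close> by simp
    then have "e_reg \<alpha> \<kappa> k / gam \<alpha> k \<le> e_reg \<alpha> \<kappa> N / gam \<alpha> k + \<epsilon> / 2"
      using gam_k by (simp add: field_simps)
    moreover have "0 \<le> e_reg \<alpha> \<kappa> k / gam \<alpha> k"
      using gam_k e_reg_ge_1[where \<alpha>=\<alpha>, OF pos, of \<kappa> k] by (simp add: zero_le_divide_iff)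
    ultimately show ?case
      unfolding dist_real_def diff_zero abs_less_iff using elim(1) by linarith
  qed
qed

definition noise_weight :: "(nat \<Rightarrow> real) \<Rightarrow> nat \<Rightarrow> real" where
  "noise_weight \<alpha> k = (\<Sum>i=1..k. 1 / (\<alpha> i)\<^sup>2 + (gam \<alpha> (i - 1))\<^sup>2)"

lemma e_noise_eq: "e_noise \<alpha> \<delta> k = \<delta>\<^sup>2 * noise_weight \<alpha> k"
  by (simp add: e_noise_def noise_weight_def)

lemma noise_weight_mono: "j \<le> k \<Longrightarrow> noise_weight \<alpha> j \<le> noise_weight \<alpha> k"
  unfolding noise_weight_def by (intro sum_mono2) auto

lemma half_sum_gam_power2_le_e_noise:
  "(1/2) * \<delta>\<^sup>2 * (\<Sum>i=1..k. (gam \<alpha> i)\<^sup>2) \<le> e_noise \<alpha> \<delta> k"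
proof -
  have "(\<Sum>i=1..k. (gam \<alpha> i)\<^sup>2) \<le> (\<Sum>i=1..k. 2 * (1 / (\<alpha> i)\<^sup>2 + (gam \<alpha> (i - 1))\<^sup>2))"
    by (intro sum_mono gam_power2_le) auto
  then have "\<delta>\<^sup>2 * (\<Sum>i=1..k. (gam \<alpha> i)\<^sup>2) \<le> \<delta>\<^sup>2 * (2 * noise_weight \<alpha> k)"
    unfolding noise_weight_def sum_distrib_left[symmetric] by (intro mult_left_mono) auto
  then show ?thesis
    unfolding e_noise_eq by simp
qed

lemma e_reg_le_linear:
  assumes pos: "\<And>k. k \<ge> 1 \<Longrightarrow> \<alpha> k > 0" and "0 \<le> \<kappa>"
  shows "e_reg \<alpha> \<kappa> N \<le> 1 + gam \<alpha> 1 powr (-\<kappa>) * gam \<alpha> N"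
proof -
  have "(\<Sum>i=1..N. 1 / \<alpha> i * gam \<alpha> i powr (-\<kappa>)) \<le> (\<Sum>i=1..N. gam \<alpha> 1 powr (-\<kappa>) * (1 / \<alpha> i))"
  proof (rule sum_mono)
    fix i assume i: "i \<in> {1..N}"
    then have "gam \<alpha> i powr (-\<kappa>) \<le> gam \<alpha> 1 powr (-\<kappa>)"
      using pos gam_pos[where \<alpha>=\<alpha>, OF pos, of 1] \<open>0 \<le> \<kappa>\<close>
      by (intro powr_mono2' gam_mono) auto
    then show "1 / \<alpha> i * gam \<alpha> i powr (-\<kappa>) \<le> gam \<alpha> 1 powr (-\<kappa>) * (1 / \<alpha> i)"
      using pos[of i] i by (simp add: divide_right_mono)
  qed
  then show ?thesis
    unfolding e_reg_def gam_def sum_distrib_left by simp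
qed

lemma e_noise_ge_half_gam_power2:
  assumes "N \<ge> 1"
  shows "\<delta>\<^sup>2 * (gam \<alpha> N)\<^sup>2 / 2 \<le> e_noise \<alpha> \<delta> N"
proof -
  have "1 / (\<alpha> N)\<^sup>2 + (gam \<alpha> (N - 1))\<^sup>2 \<le> noise_weight \<alpha> N"
    unfolding noise_weight_def using assms by (intro member_le_sum) auto
  then have "(gam \<alpha> N)\<^sup>2 \<le> 2 * noise_weight \<alpha> N"
    using gam_power2_le[OF assms, of \<alpha>] by (simp add: algebra_simps)
  then have "\<delta>\<^sup>2 * (gam \<alpha> N)\<^sup>2 \<le> \<delta>\<^sup>2 * (2 * noise_weight \<alpha> N)"
    by (rule mult_left_mono) simp
  then show ?thesis
    unfolding e_noise_eq by simp
qed

text \<open>By the two bounds above the stopping condition fails for large \<open>k\<close>, so the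
  \<open>GREATEST\<close> in \<open>kstop\<close> is well defined.\<close>

lemma kstop_condition_bounded:
  assumes pos: "\<And>k. k \<ge> 1 \<Longrightarrow> \<alpha> k > 0" and bdd: "\<And>k. k \<ge> 1 \<Longrightarrow> \<alpha> k \<le> C"
    and "0 \<le> \<kappa>" "\<tau> > 0" "\<delta> > 0"
  shows "\<exists>b. \<forall>y. (\<forall>i\<in>{1..y}. e_noise \<alpha> \<delta> i \<le> \<tau> * e_reg \<alpha> \<kappa> i) \<longrightarrow> y \<le> b"
proof -
  define D where "D = gam \<alpha> 1 powr (-\<kappa>)"
  define X where "X = 1 + 2 * \<tau> * (1 + D) / \<delta>\<^sup>2"
  have "\<forall>\<^sub>F k in at_top. X \<le> gam \<alpha> k \<and> k \<ge> 1"
    using gam_at_top[where \<alpha>=\<alpha>, OF pos bdd] by (simp add: filterlim_at_top eventually_ge_at_top eventually_conj)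
  then obtain N where N: "X \<le> gam \<alpha> N" "N \<ge> 1" by (auto simp: eventually_at_top_linorder)
  define x where "x = gam \<alpha> N"
  have "0 \<le> D" by (simp add: D_def)
  then have "1 \<le> X" unfolding X_def using \<open>\<tau> > 0\<close> by simp
  then have x: "1 \<le> x" using N unfolding x_def by simp
  have "\<tau> * e_reg \<alpha> \<kappa> N \<le> \<tau> * (1 + D * x)"
    using e_reg_le_linear[where \<alpha>=\<alpha>, OF pos \<open>0 \<le> \<kappa>\<close>, of N] \<open>\<tau> > 0\<close> unfolding D_def x_def by simp
  also have "\<dots> \<le> \<tau> * (1 + D) * x"
    using x \<open>0 \<le> D\<close> \<open>\<tau> > 0\<close> by (simp add: algebra_simps)
  also have "\<dots> < \<delta>\<^sup>2 * x / 2 + \<tau> * (1 + D) * x"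
    using \<open>\<delta> > 0\<close> x by simp
  also have "\<dots> = \<delta>\<^sup>2 * x * X / 2"
    unfolding X_def using \<open>\<delta> > 0\<close> by (simp add: divide_simps) (simp add: algebra_simps)
  also have "\<dots> \<le> \<delta>\<^sup>2 * x\<^sup>2 / 2"
  proof -
    have "x * X \<le> x * x" using x N(1) unfolding x_def by (intro mult_left_mono) auto
    then have "\<delta>\<^sup>2 * (x * X) \<le> \<delta>\<^sup>2 * (x * x)" by (rule mult_left_mono) simp
    then show ?thesis by (simp add: power2_eq_square mult.assoc)
  qed
  also have "\<dots> \<le> e_noise \<alpha> \<delta> N"
    unfolding x_def using N(2) by (rule e_noise_ge_half_gam_power2)
  finally have fail: "\<tau> * e_reg \<alpha> \<kappa> N < e_noise \<alpha> \<delta> N" .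
  show ?thesis
  proof (intro exI allI impI)
    fix y assume stop: "\<forall>i\<in>{1..y}. e_noise \<alpha> \<delta> i \<le> \<tau> * e_reg \<alpha> \<kappa> i"
    show "y \<le> N"
    proof (rule ccontr)
      assume "\<not> y \<le> N"
      then have "e_noise \<alpha> \<delta> N \<le> \<tau> * e_reg \<alpha> \<kappa> N" using stop N(2) by simp
      then show False using fail by simp
    qed
  qed
qed

lemma kstop_ge:
  assumes pos: "\<And>k. k \<ge> 1 \<Longrightarrow> \<alpha> k > 0" and bdd: "\<And>k. k \<ge> 1 \<Longrightarrow> \<alpha> k \<le> C"
    and "0 \<le> \<kappa>" "\<tau> > 0" "\<delta> > 0" "N \<ge> 1" and small: "\<delta>\<^sup>2 * noise_weight \<alpha> N \<le> \<tau>"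
  shows "N \<le> kstop \<alpha> \<kappa> \<tau> \<delta>"
proof -
  define P where "P y \<longleftrightarrow> (\<forall>i\<in>{1..y}. e_noise \<alpha> \<delta> i \<le> \<tau> * e_reg \<alpha> \<kappa> i)" for y
  have "P N" unfolding P_def
  proof
    fix i assume i: "i \<in> {1..N}"
    have "e_noise \<alpha> \<delta> i \<le> \<delta>\<^sup>2 * noise_weight \<alpha> N"
      unfolding e_noise_eq using noise_weight_mono[of i N \<alpha>] i by (intro mult_left_mono) auto
    also have "\<dots> \<le> \<tau>" by (rule small)
    also have "\<dots> \<le> \<tau> * e_reg \<alpha> \<kappa> i"
      using e_reg_ge_1[where \<alpha>=\<alpha>, OF pos, of \<kappa> i] \<open>\<tau> > 0\<close> by (simp add: mult_le_cancel_left1)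
    finally show "e_noise \<alpha> \<delta> i \<le> \<tau> * e_reg \<alpha> \<kappa> i" .
  qed
  moreover have "1 \<in> {1..N}" using \<open>N \<ge> 1\<close> by simp
  ultimately have not_early: "\<not> e_noise \<alpha> \<delta> 1 > \<tau> * e_reg \<alpha> \<kappa> 1"
    unfolding P_def by (meson not_less)
  obtain b where "\<And>y. P y \<Longrightarrow> y \<le> b"
    using kstop_condition_bounded[where \<alpha>=\<alpha>, OF pos bdd \<open>0 \<le> \<kappa>\<close> \<open>\<tau> > 0\<close> \<open>\<delta> > 0\<close>] unfolding P_def by blast
  then have "N \<le> Greatest P" using \<open>P N\<close> by (intro Greatest_le_nat) auto
  then show ?thesis unfolding kstop_def P_def using not_early by simp
qed

lemma kstop_at_top:
  assumes pos: "\<And>k. k \<ge> 1 \<Longrightarrow> \<alpha> k > 0" and bdd: "\<And>k. k \<ge> 1 \<Longrightarrow> \<alpha> k \<le> C"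
    and "0 \<le> \<kappa>" "\<tau> > 0"
  shows "filterlim (kstop \<alpha> \<kappa> \<tau>) at_top (at_right 0)"
  unfolding filterlim_at_top
proof
  fix N0 :: nat
  define N where "N = max N0 1"
  have W: "0 \<le> noise_weight \<alpha> N" unfolding noise_weight_def by (intro sum_nonneg) auto
  define b where "b = min 1 (\<tau> / (noise_weight \<alpha> N + 1))"
  have "\<forall>\<^sub>F \<delta> in at_right 0. N \<le> kstop \<alpha> \<kappa> \<tau> \<delta>"
    unfolding eventually_at_right_field
  proof (intro exI conjI allI impI)
    show "0 < b" unfolding b_def using \<open>\<tau> > 0\<close> W by simp
    fix \<delta> :: real assume \<delta>: "0 < \<delta>" "\<delta> < b"
    have "\<delta>\<^sup>2 \<le> \<delta>" using \<delta> unfolding b_def by (simp add: power2_eq_square mult_le_cancel_right1)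
    also have "\<delta> \<le> \<tau> / (noise_weight \<alpha> N + 1)" using \<delta> unfolding b_def by simp
    finally have "\<delta>\<^sup>2 * (noise_weight \<alpha> N + 1) \<le> \<tau>" using W by (simp add: pos_le_divide_eq)
    moreover have "\<delta>\<^sup>2 * noise_weight \<alpha> N \<le> \<delta>\<^sup>2 * (noise_weight \<alpha> N + 1)"
      by (simp add: algebra_simps)
    ultimately have "\<delta>\<^sup>2 * noise_weight \<alpha> N \<le> \<tau>" by linarith
    moreover have "N \<ge> 1" by (simp add: N_def)
    ultimately show "N \<le> kstop \<alpha> \<kappa> \<tau> \<delta>"
      using kstop_ge[where \<alpha>=\<alpha>, OF pos bdd \<open>0 \<le> \<kappa>\<close> \<open>\<tau> > 0\<close> \<delta>(1)] by blast
  qed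
  then show "\<forall>\<^sub>F \<delta> in at_right 0. N0 \<le> kstop \<alpha> \<kappa> \<tau> \<delta>"
    by eventually_elim (simp add: N_def)
qed

lemma e_noise_kstop_le:
  assumes pos: "\<And>k. k \<ge> 1 \<Longrightarrow> \<alpha> k > 0" and bdd: "\<And>k. k \<ge> 1 \<Longrightarrow> \<alpha> k \<le> C"
    and "0 \<le> \<kappa>" "\<tau> > 0" "\<delta> > 0" and k: "kstop \<alpha> \<kappa> \<tau> \<delta> \<ge> 1"
  shows "e_noise \<alpha> \<delta> (kstop \<alpha> \<kappa> \<tau> \<delta>) \<le> \<tau> * e_reg \<alpha> \<kappa> (kstop \<alpha> \<kappa> \<tau> \<delta>)"
proof -
  define P where "P y \<longleftrightarrow> (\<forall>i\<in>{1..y}. e_noise \<alpha> \<delta> i \<le> \<tau> * e_reg \<alpha> \<kappa> i)" for y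
  obtain b where "\<And>y. P y \<Longrightarrow> y \<le> b"
    using kstop_condition_bounded[where \<alpha>=\<alpha>, OF pos bdd \<open>0 \<le> \<kappa>\<close> \<open>\<tau> > 0\<close> \<open>\<delta> > 0\<close>] unfolding P_def by blast
  then have "P (Greatest P)" by (intro GreatestI_nat[of P 0]) (auto simp: P_def)
  moreover have "kstop \<alpha> \<kappa> \<tau> \<delta> = Greatest P"
  proof (cases "e_noise \<alpha> \<delta> 1 > \<tau> * e_reg \<alpha> \<kappa> 1")
    case True
    then show ?thesis using k by (simp add: kstop_def)
  next
    case False
    then show ?thesis by (simp add: kstop_def P_def[abs_def])
  qed
  ultimately have "\<forall>i\<in>{1..kstop \<alpha> \<kappa> \<tau> \<delta>}. e_noise \<alpha> \<delta> i \<le> \<tau> * e_reg \<alpha> \<kappa> i"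
    by (simp add: P_def)
  moreover have "kstop \<alpha> \<kappa> \<tau> \<delta> \<in> {1..kstop \<alpha> \<kappa> \<tau> \<delta>}" using k by simp
  ultimately show ?thesis by blast
qed

lemma gam_mult_Min_power2_le:
  assumes pos: "\<And>k. k \<ge> 1 \<Longrightarrow> \<alpha> k > 0" and "k \<ge> 1" and f: "\<And>j. 0 \<le> f j"
  shows "gam \<alpha> k * (Min (f ` {1..k}))\<^sup>2 \<le> (\<Sum>i=1..k. (1 / \<alpha> i) * (f i)\<^sup>2)"
proof -
  have "gam \<alpha> k * (Min (f ` {1..k}))\<^sup>2 = (\<Sum>i=1..k. (1 / \<alpha> i) * (Min (f ` {1..k}))\<^sup>2)"
    unfolding gam_def by (simp add: sum_distrib_right)
  also have "\<dots> \<le> (\<Sum>i=1..k. (1 / \<alpha> i) * (f i)\<^sup>2)"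
  proof (rule sum_mono)
    fix i assume i: "i \<in> {1..k}"
    have "0 \<le> Min (f ` {1..k})" using \<open>k \<ge> 1\<close> f by (subst Min_ge_iff) auto
    then have "(Min (f ` {1..k}))\<^sup>2 \<le> (f i)\<^sup>2" using i by (intro power_mono Min_le) auto
    then show "(1 / \<alpha> i) * (Min (f ` {1..k}))\<^sup>2 \<le> (1 / \<alpha> i) * (f i)\<^sup>2"
      using pos[of i] i by (intro mult_left_mono) auto
  qed
  finally show ?thesis .
qed

lemma Min_tendsto_0_if_weighted_sum_bound:
  fixes f :: "'b \<Rightarrow> nat \<Rightarrow> real" and k :: "'b \<Rightarrow> nat"
  assumes pos: "\<And>k. k \<ge> 1 \<Longrightarrow> \<alpha> k > 0" and bdd: "\<And>k. k \<ge> 1 \<Longrightarrow> \<alpha> k \<le> C" and "\<kappa> > 0"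
    and k: "filterlim k at_top F" and f: "\<And>x j. 0 \<le> f x j"
    and bound: "\<forall>\<^sub>F x in F. (\<Sum>i=1..k x. (1 / \<alpha> i) * (f x i)\<^sup>2) \<le> B * e_reg \<alpha> \<kappa> (k x)"
  shows "((\<lambda>x. Min (f x ` {1..k x})) \<longlongrightarrow> 0) F"
proof (rule tendsto_sandwich[OF _ _ tendsto_const])
  define R where "R k = e_reg \<alpha> \<kappa> k / gam \<alpha> k" for k
  have "(R \<longlongrightarrow> 0) at_top" unfolding R_def using pos bdd \<open>\<kappa> > 0\<close> by (rule e_reg_over_gam_tendsto_0)
  then have "((\<lambda>x. R (k x)) \<longlongrightarrow> 0) F" using k by (rule filterlim_compose)
  then show "((\<lambda>x. sqrt (B * R (k x))) \<longlongrightarrow> 0) F"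
    using tendsto_real_sqrt[OF tendsto_mult_right_zero] by fastforce
  have "\<forall>\<^sub>F x in F. 1 \<le> k x" using k by (simp add: filterlim_at_top)
  then show "\<forall>\<^sub>F x in F. 0 \<le> Min (f x ` {1..k x})"
    by eventually_elim (use f in \<open>auto simp: Min_ge_iff\<close>)
  show "\<forall>\<^sub>F x in F. Min (f x ` {1..k x}) \<le> sqrt (B * R (k x))"
    using \<open>\<forall>\<^sub>F x in F. 1 \<le> k x\<close> bound
  proof eventually_elim
    case (elim x)
    have gam_k: "gam \<alpha> (k x) > 0" using pos elim by (intro gam_pos) auto
    have "gam \<alpha> (k x) * (Min (f x ` {1..k x}))\<^sup>2 \<le> B * e_reg \<alpha> \<kappa> (k x)"
      using gam_mult_Min_power2_le[where \<alpha>=\<alpha> and f="f x", OF pos elim(1) f] elim(2) by linarith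
    then have "(Min (f x ` {1..k x}))\<^sup>2 \<le> B * R (k x)"
      unfolding R_def using gam_k by (simp add: pos_le_divide_eq mult.commute mult.left_commute)
    then show ?case using real_le_rsqrt by blast
  qed
qed

section \<open>The Bregman iteration in \<open>L\<^sup>2(\<Omega>)\<close>\<close>

definition breg_residual_sum ::
  "(('a \<Rightarrow> real) \<Rightarrow> 'y::real_normed_vector) \<Rightarrow> (nat \<Rightarrow> real) \<Rightarrow> 'y \<Rightarrow> (nat \<Rightarrow> 'a \<Rightarrow> real) \<Rightarrow> nat \<Rightarrow> 'y"
  where "breg_residual_sum S \<alpha> \<zeta> u k = (\<Sum>i=1..k. (1 / \<alpha> i) *\<^sub>R (\<zeta> - S (u i)))"

definition breg_image_error_sum ::
  "(('a \<Rightarrow> real) \<Rightarrow> 'y::real_normed_vector) \<Rightarrow> (nat \<Rightarrow> real) \<Rightarrow> (nat \<Rightarrow> 'a \<Rightarrow> real) \<Rightarrow> ('a \<Rightarrow> real)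
    \<Rightarrow> nat \<Rightarrow> 'y"
  where "breg_image_error_sum S \<alpha> u v k = (\<Sum>i=1..k. (1 / \<alpha> i) *\<^sub>R (S (u i) - S v))"

lemma breg_residual_sum_Suc:
  "breg_residual_sum S \<alpha> \<zeta> u (Suc k)
    = breg_residual_sum S \<alpha> \<zeta> u k + (1 / \<alpha> (Suc k)) *\<^sub>R (\<zeta> - S (u (Suc k)))"
  unfolding breg_residual_sum_def by simp

lemma breg_image_error_sum_Suc:
  "breg_image_error_sum S \<alpha> u v (Suc k)
    = breg_image_error_sum S \<alpha> u v k + (1 / \<alpha> (Suc k)) *\<^sub>R (S (u (Suc k)) - S v)"
  unfolding breg_image_error_sum_def by simp

lemma breg_residual_sum_decomp:
  "breg_residual_sum S \<alpha> \<zeta> u k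
    = gam \<alpha> k *\<^sub>R (\<zeta> - z) + gam \<alpha> k *\<^sub>R (z - S v) - breg_image_error_sum S \<alpha> u v k"
proof -
  have "breg_residual_sum S \<alpha> \<zeta> u k = (\<Sum>i=1..k. (1 / \<alpha> i) *\<^sub>R (\<zeta> - z)
      + (1 / \<alpha> i) *\<^sub>R (z - S v) - (1 / \<alpha> i) *\<^sub>R (S (u i) - S v))"
    unfolding breg_residual_sum_def by (intro sum.cong refl) (simp add: algebra_simps)
  then show ?thesis
    unfolding gam_def breg_image_error_sum_def by (simp add: sum.distrib sum_subtractf scaleR_sum_left)
qed

locale L2_adjoint_pair =
  fixes \<Omega> :: "'a::euclidean_space set"
    and S :: "('a \<Rightarrow> real) \<Rightarrow> 'y::real_inner"
    and Sadj :: "'y \<Rightarrow> 'a \<Rightarrow> real"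
  assumes \<Omega>_lmeasurable: "\<Omega> \<in> lmeasurable"
    and S_add: "\<And>u v. u \<in> L2 \<Omega> \<Longrightarrow> v \<in> L2 \<Omega> \<Longrightarrow> S (\<lambda>x. u x + v x) = S u + S v"
    and S_scale: "\<And>c u. u \<in> L2 \<Omega> \<Longrightarrow> S (\<lambda>x. c * u x) = c *\<^sub>R S u"
    and Sadj_L2: "\<And>w. Sadj w \<in> L2 \<Omega>"
    and Sadj_adj: "\<And>w u. u \<in> L2 \<Omega> \<Longrightarrow> l2inner \<Omega> u (Sadj w) = inner (S u) w"
begin

lemma S_add_scaled:
  assumes "u \<in> L2 \<Omega>" "v \<in> L2 \<Omega>"
  shows "S (\<lambda>x. u x + t * v x) = S u + t *\<^sub>R S v"
  using S_add[OF assms(1) L2_cmult[OF assms(2)]] S_scale[OF assms(2)] by simp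

lemma S_diff: "u \<in> L2 \<Omega> \<Longrightarrow> v \<in> L2 \<Omega> \<Longrightarrow> S (\<lambda>x. u x - v x) = S u - S v"
  using S_add_scaled[of u v "-1"] by simp

lemma minimizer_variational_ineq:
  assumes u: "u \<in> Uad \<Omega> ua ub"
    and min: "\<And>v. v \<in> Uad \<Omega> ua ub \<Longrightarrow> (1/2) * (norm (S u - z))\<^sup>2 \<le> (1/2) * (norm (S v - z))\<^sup>2"
    and v: "v \<in> Uad \<Omega> ua ub"
  shows "inner (S (\<lambda>x. v x - u x)) (z - S u) \<le> 0"
proof -
  define h where "h = (\<lambda>x. v x - u x)"
  have uL: "u \<in> L2 \<Omega>" and hL: "h \<in> L2 \<Omega>"
    using u v unfolding h_def by (auto intro: Uad_L2 L2_diff)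
  have "0 \<le> t * inner (S u - z) (S h) + t\<^sup>2 * ((1/2) * (norm (S h))\<^sup>2)" if "0 < t" "t \<le> 1" for t
  proof -
    have "(\<lambda>x. u x + t * h x) \<in> Uad \<Omega> ua ub"
      unfolding h_def using Uad_convex[OF u v] that by simp
    then have "(norm (S u - z))\<^sup>2 \<le> (norm ((S u - z) + t *\<^sub>R S h))\<^sup>2"
      using min S_add_scaled[OF uL hL] by (fastforce simp: algebra_simps)
    then show ?thesis unfolding norm_add_scaleR_power2 by (simp add: algebra_simps)
  qed
  then have "0 \<le> inner (S u - z) (S h)"
    by (rule nonneg_if_small_quadratic_nonneg) auto
  then show ?thesis unfolding h_def by (simp add: inner_diff_left inner_diff_right inner_commute)
qed

text \<open>Testing the variational inequality with \<open>u\<^sup>\<dagger>\<close> modified on the set where the claimed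
  sign fails (by \<open>ub\<close> where \<open>p > 0\<close>, by \<open>ua\<close> where \<open>p < 0\<close>) gives the bang-bang
  structure \<open>p > 0 \<Rightarrow> u\<^sup>\<dagger> = ub\<close>, \<open>p < 0 \<Rightarrow> u\<^sup>\<dagger> = ua\<close> almost everywhere.\<close>

lemma adjoint_sign_condition:
  assumes uz: "uz \<in> Uad \<Omega> ua ub"
    and vi: "\<And>v. v \<in> Uad \<Omega> ua ub \<Longrightarrow> inner (S (\<lambda>x. v x - uz x)) P \<le> 0"
    and ua: "ua \<in> Linf \<Omega>" and ub: "ub \<in> Linf \<Omega>"
    and u: "u \<in> Uad \<Omega> ua ub"
  shows "AE x in lebesgue_on \<Omega>. Sadj P x * (u x - uz x) \<le> 0"
proof -
  define p where "p = Sadj P"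
  have pL: "p \<in> L2 \<Omega>" unfolding p_def by (rule Sadj_L2)
  have uzL: "uz \<in> L2 \<Omega>" using uz by (rule Uad_L2)
  have uaL: "ua \<in> L2 \<Omega>" and ubL: "ub \<in> L2 \<Omega>"
    using ua ub Linf_subset_L2[OF \<Omega>_lmeasurable] by auto
  have [measurable]: "p \<in> borel_measurable (lebesgue_on \<Omega>)" "uz \<in> borel_measurable (lebesgue_on \<Omega>)"
    "ua \<in> borel_measurable (lebesgue_on \<Omega>)" "ub \<in> borel_measurable (lebesgue_on \<Omega>)"
    using pL uzL uaL ubL L2_borel_measurable by auto
  have uz_bounds: "AE x in lebesgue_on \<Omega>. ua x \<le> uz x \<and> uz x \<le> ub x" using uz by (rule Uad_AE_bounds)
  have no_gain: "AE x in lebesgue_on \<Omega>. \<not> Q x"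
    if b: "b \<in> L2 \<Omega>" "AE x in lebesgue_on \<Omega>. ua x \<le> b x \<and> b x \<le> ub x"
      and Q: "Measurable.pred (lebesgue_on \<Omega>) Q" and gain: "\<And>x. Q x \<Longrightarrow> 0 < (b x - uz x) * p x"
    for b Q
  proof -
    define v where "v = (\<lambda>x. if Q x then b x else uz x)"
    have v: "v \<in> Uad \<Omega> ua ub" unfolding v_def by (rule Uad_patch[OF uz b Q])
    have "integral\<^sup>L (lebesgue_on \<Omega>) (\<lambda>x. (v x - uz x) * p x) = inner (S (\<lambda>x. v x - uz x)) P"
      unfolding p_def l2inner_def[symmetric] using Uad_L2[OF v] uzL by (intro Sadj_adj L2_diff)
    also have "\<dots> \<le> 0" using vi[OF v] .
    finally have "AE x in lebesgue_on \<Omega>. (v x - uz x) * p x = 0"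
    proof (rule AE_eq_0_if_integral_nonpos[rotated 2])
      show "integrable (lebesgue_on \<Omega>) (\<lambda>x. (v x - uz x) * p x)"
        using Uad_L2[OF v] uzL pL by (intro L2_integrable_mult L2_diff)
      show "0 \<le> (v x - uz x) * p x" for x
        using gain[of x] unfolding v_def by (cases "Q x") auto
    qed
    then show ?thesis by eventually_elim (use gain in \<open>fastforce simp: v_def\<close>)
  qed
  have upper: "AE x in lebesgue_on \<Omega>. \<not> (0 < p x \<and> uz x < ub x)"
    using uz_bounds by (intro no_gain[OF ubL]) (auto elim: eventually_mono)
  have lower: "AE x in lebesgue_on \<Omega>. \<not> (p x < 0 \<and> ua x < uz x)"
    using uz_bounds by (intro no_gain[OF uaL]) (auto elim: eventually_mono intro: mult_neg_neg)
  from upper lower Uad_AE_bounds[OF u] show ?thesis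
    unfolding p_def[symmetric]
    by eventually_elim (auto simp: mult_le_0_iff not_less)
qed

lemma active_set_estimate:
  assumes uzL: "uz \<in> L2 \<Omega>" and uL: "u \<in> L2 \<Omega>"
    and sign: "AE x in lebesgue_on \<Omega>. p x * (u x - uz x) \<le> 0" and pL: "p \<in> L2 \<Omega>"
    and I: "I \<in> sets lebesgue" "{x\<in>\<Omega>. p x = 0} \<subseteq> I"
    and proj: "AE x in lebesgue_on \<Omega>. x \<in> I \<longrightarrow> uz x = projUad ua ub s x"
    and small: "\<forall>\<epsilon>>0. measure lebesgue {x \<in> \<Omega> - I. 0 < \<bar>p x\<bar> \<and> \<bar>p x\<bar> < \<epsilon>} \<le> c * \<epsilon> powr \<kappa>"
    and bounds: "AE x in lebesgue_on \<Omega>. ua x \<le> u x \<and> u x \<le> ub x"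
    and e_bdd: "AE x in lebesgue_on \<Omega>. \<bar>u x - uz x\<bar> \<le> Mb"
    and g_bdd: "AE x in lebesgue_on \<Omega>. \<bar>uz x - s x\<bar> \<le> G"
    and sL: "s \<in> L2 \<Omega>" and "G > 0" "Mb \<ge> 0" "\<gamma> > 0"
  shows "\<gamma> * l2inner \<Omega> (\<lambda>x. u x - uz x) p - l2inner \<Omega> (\<lambda>x. u x - uz x) (\<lambda>x. uz x - s x)
    \<le> G * Mb * (c * G powr \<kappa>) * \<gamma> powr (-\<kappa>)"
proof -
  let ?M = "lebesgue_on \<Omega>"
  have eL: "(\<lambda>x. u x - uz x) \<in> L2 \<Omega>" and gL: "(\<lambda>x. uz x - s x) \<in> L2 \<Omega>"
    using uL uzL sL by (auto intro: L2_diff)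
  have [measurable]: "p \<in> borel_measurable ?M" using pL by (rule L2_borel_measurable)
  have \<Omega>: "\<Omega> \<in> sets lebesgue" using \<Omega>_lmeasurable by (simp add: fmeasurable_def)
  define B where "B = {x \<in> \<Omega> - I. 0 < \<bar>p x\<bar> \<and> \<bar>p x\<bar> < G / \<gamma>}"
  have "I \<inter> \<Omega> \<in> sets ?M"
    using sets_restrict_space_iff[of \<Omega> lebesgue "I \<inter> \<Omega>"] I(1) \<Omega> by auto
  moreover have "{x \<in> space ?M. 0 < \<bar>p x\<bar> \<and> \<bar>p x\<bar> < G / \<gamma>} \<in> sets ?M"
    by measurable
  ultimately have "{x \<in> space ?M. 0 < \<bar>p x\<bar> \<and> \<bar>p x\<bar> < G / \<gamma>} - (I \<inter> \<Omega>) \<in> sets ?M"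
    by auto
  moreover have "{x \<in> space ?M. 0 < \<bar>p x\<bar> \<and> \<bar>p x\<bar> < G / \<gamma>} - (I \<inter> \<Omega>) = B"
    unfolding B_def by (auto simp: space_restrict_space)
  ultimately have B_sets: "B \<in> sets ?M" by simp
  have "AE x in ?M. \<gamma> * ((u x - uz x) * p x) - (u x - uz x) * (uz x - s x) \<le> G * Mb * indicator B x"
    unfolding B_def by (rule active_set_AE_bound[OF sign I(2) proj bounds e_bdd g_bdd]) fact+
  then have "integral\<^sup>L ?M (\<lambda>x. \<gamma> * ((u x - uz x) * p x) - (u x - uz x) * (uz x - s x))
      \<le> integral\<^sup>L ?M (\<lambda>x. G * Mb * indicator B x)"
  proof (rule integral_mono_AE[rotated 2])
    show "integrable ?M (\<lambda>x. \<gamma> * ((u x - uz x) * p x) - (u x - uz x) * (uz x - s x))"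
      using eL pL gL by (intro Bochner_Integration.integrable_diff integrable_mult_right L2_integrable_mult)
    show "integrable ?M (\<lambda>x. G * Mb * indicator B x)"
    proof (rule finite_measure.integrable_const_bound[where B="G * Mb"])
      show "finite_measure ?M" using \<Omega>_lmeasurable by (rule finite_measure_lebesgue_on)
      show "AE x in ?M. norm (G * Mb * indicator B x) \<le> G * Mb"
        using \<open>G > 0\<close> \<open>Mb \<ge> 0\<close> by (intro AE_I2) (auto simp: indicator_def)
    qed (use B_sets in measurable)
  qed
  then have "\<gamma> * l2inner \<Omega> (\<lambda>x. u x - uz x) p - l2inner \<Omega> (\<lambda>x. u x - uz x) (\<lambda>x. uz x - s x)
      \<le> integral\<^sup>L ?M (\<lambda>x. G * Mb * indicator B x)"
    unfolding l2inner_def using eL pL gL by (simp add: L2_integrable_mult)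
  also have "\<dots> = G * Mb * measure lebesgue B"
    using B_sets \<Omega> by (simp add: measure_restrict_space B_def Int_absorb2 space_restrict_space)
  also have "\<dots> \<le> G * Mb * (c * (G / \<gamma>) powr \<kappa>)"
    using small \<open>G > 0\<close> \<open>Mb \<ge> 0\<close> \<open>\<gamma> > 0\<close> unfolding B_def by (intro mult_left_mono) auto
  also have "(G / \<gamma>) powr \<kappa> = G powr \<kappa> * \<gamma> powr (-\<kappa>)"
    using \<open>G > 0\<close> \<open>\<gamma> > 0\<close> by (subst powr_divide) (auto simp: powr_minus_divide)
  finally show ?thesis by (simp add: algebra_simps)
qed

lemma active_set_condition_estimate:
  assumes ua: "ua \<in> Linf \<Omega>" and ub: "ub \<in> Linf \<Omega>" and uz: "uz \<in> Uad \<Omega> ua ub"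
    and min: "\<And>v. v \<in> Uad \<Omega> ua ub \<Longrightarrow> (1/2) * (norm (S uz - z))\<^sup>2 \<le> (1/2) * (norm (S v - z))\<^sup>2"
    and asc: "active_set_condition \<Omega> S Sadj ua ub z uz \<kappa>"
  obtains K :: real and w where "K \<ge> 0"
    and "\<And>u (\<gamma>::real). u \<in> Uad \<Omega> ua ub \<Longrightarrow> \<gamma> > 0 \<Longrightarrow>
      \<gamma> * l2inner \<Omega> (\<lambda>x. u x - uz x) (Sadj (z - S uz)) - l2inner \<Omega> (\<lambda>x. u x - uz x) (\<lambda>x. uz x - Sadj w x)
        \<le> K * \<gamma> powr (-\<kappa>)"
proof -
  obtain I w c where I: "I \<in> sets lebesgue" "c > 0" "{x \<in> \<Omega>. Sadj (z - S uz) x = 0} \<subseteq> I"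
    and proj: "AE x in lebesgue_on \<Omega>. x \<in> I \<longrightarrow> uz x = projUad ua ub (Sadj w) x"
    and small: "\<forall>\<epsilon>>0. measure lebesgue {x \<in> \<Omega> - I. 0 < \<bar>Sadj (z - S uz) x\<bar> \<and> \<bar>Sadj (z - S uz) x\<bar> < \<epsilon>}
        \<le> c * \<epsilon> powr \<kappa>"
    and "Sadj w \<in> Linf \<Omega>"
    using asc unfolding active_set_condition_def Let_def by blast
  obtain Ca Cb Cs where Ca: "AE x in lebesgue_on \<Omega>. \<bar>ua x\<bar> \<le> Ca"
    and Cb: "AE x in lebesgue_on \<Omega>. \<bar>ub x\<bar> \<le> Cb" and Cs: "AE x in lebesgue_on \<Omega>. \<bar>Sadj w x\<bar> \<le> Cs"
    using ua ub \<open>Sadj w \<in> Linf \<Omega>\<close> unfolding Linf_def by blast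
  define G where "G = \<bar>Ca\<bar> + \<bar>Cb\<bar> + \<bar>Cs\<bar> + 1"
  define Mb where "Mb = 2 * (\<bar>Ca\<bar> + \<bar>Cb\<bar>)"
  have G: "G > 0" and Mb: "Mb \<ge> 0" unfolding G_def Mb_def by simp_all
  show ?thesis
  proof
    show "G * Mb * (c * G powr \<kappa>) \<ge> 0" using G Mb I(2) by simp
    fix u and \<gamma> :: real assume u: "u \<in> Uad \<Omega> ua ub" and "\<gamma> > 0"
    have vi: "\<And>v. v \<in> Uad \<Omega> ua ub \<Longrightarrow> inner (S (\<lambda>x. v x - uz x)) (z - S uz) \<le> 0"
      using uz min by (rule minimizer_variational_ineq)
    have bounds: "AE x in lebesgue_on \<Omega>. ua x \<le> u x \<and> u x \<le> ub x \<and> ua x \<le> uz x \<and> uz x \<le> ub x"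
      using Uad_AE_bounds[OF u] Uad_AE_bounds[OF uz] by eventually_elim auto
    show "\<gamma> * l2inner \<Omega> (\<lambda>x. u x - uz x) (Sadj (z - S uz))
        - l2inner \<Omega> (\<lambda>x. u x - uz x) (\<lambda>x. uz x - Sadj w x) \<le> G * Mb * (c * G powr \<kappa>) * \<gamma> powr (-\<kappa>)"
    proof (rule active_set_estimate[OF Uad_L2[OF uz] Uad_L2[OF u]
          adjoint_sign_condition[OF uz vi ua ub u] Sadj_L2 I(1,3) proj small])
      show "AE x in lebesgue_on \<Omega>. \<bar>u x - uz x\<bar> \<le> Mb"
        using bounds Ca Cb by eventually_elim (auto simp: Mb_def abs_le_iff)
      show "AE x in lebesgue_on \<Omega>. \<bar>uz x - Sadj w x\<bar> \<le> G"
        using bounds Ca Cb Cs by eventually_elim (auto simp: G_def abs_le_iff)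
    qed (use bounds G Mb \<open>\<gamma> > 0\<close> Sadj_L2 in \<open>auto elim: eventually_mono\<close>)
  qed
qed

lemma breg_lambda_L2: "breg_lambda S Sadj \<alpha> \<zeta> u k \<in> L2 \<Omega>"
  by (simp add: breg_lambda_def L2_zero Sadj_L2)

lemma l2inner_breg_lambda:
  "v \<in> L2 \<Omega> \<Longrightarrow> l2inner \<Omega> v (breg_lambda S Sadj \<alpha> \<zeta> u k) = inner (S v) (breg_residual_sum S \<alpha> \<zeta> u k)"
  by (simp add: breg_lambda_def breg_residual_sum_def l2inner_zero_right Sadj_adj)

lemma breg_obj_add_scaled:
  assumes ukL: "u k \<in> L2 \<Omega>" and hL: "h \<in> L2 \<Omega>" and prev: "k \<ge> 2 \<Longrightarrow> u (k - 1) \<in> L2 \<Omega>"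
  shows "breg_obj \<Omega> S Sadj \<alpha> \<zeta> u k (\<lambda>x. u k x + t * h x) = breg_obj \<Omega> S Sadj \<alpha> \<zeta> u k (u k)
    + t * (inner (S (u k) - \<zeta>) (S h)
        + \<alpha> k * (l2inner \<Omega> (u k) h - l2inner \<Omega> h (breg_lambda S Sadj \<alpha> \<zeta> u (k - 1))))
    + t\<^sup>2 * ((1/2) * (norm (S h))\<^sup>2 + \<alpha> k * ((1/2) * l2inner \<Omega> h h))"
proof -
  define lam where "lam = breg_lambda S Sadj \<alpha> \<zeta> u (k - 1)"
  define N L Lp where "N = (norm (S (u k) - \<zeta>))\<^sup>2" and "L = (l2norm \<Omega> (u k))\<^sup>2"
    and "Lp = (l2norm \<Omega> (u (k - 1)))\<^sup>2"
  define I where "I = l2inner \<Omega> (\<lambda>x. u k x - u (k - 1) x) lam"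
  have lam_lin: "l2inner \<Omega> (\<lambda>x. u k x + t * h x - u (k - 1) x) lam = I + t * l2inner \<Omega> h lam"
  proof (cases "k \<ge> 2")
    case True
    then have "(\<lambda>x. u k x - u (k - 1) x) \<in> L2 \<Omega>"
      using prev ukL by (intro L2_diff) auto
    moreover have "(\<lambda>x. u k x + t * h x - u (k - 1) x) = (\<lambda>x. (u k x - u (k - 1) x) + t * h x)"
      by (auto simp: algebra_simps)
    ultimately show ?thesis
      unfolding I_def lam_def
      using l2inner_add_scaled_left[where v=h and w="breg_lambda S Sadj \<alpha> \<zeta> u (k - 1)"] hL breg_lambda_L2
      by simp
  next
    case False
    then show ?thesis by (simp add: I_def lam_def breg_lambda_def l2inner_zero_right)
  qed
  have "breg_obj \<Omega> S Sadj \<alpha> \<zeta> u k (u k) = (1/2) * N + \<alpha> k * ((1/2) * L - (1/2) * Lp - I)"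
    unfolding breg_obj_def N_def L_def Lp_def I_def lam_def ..
  moreover have "S (\<lambda>x. u k x + t * h x) - \<zeta> = (S (u k) - \<zeta>) + t *\<^sub>R S h"
    using S_add_scaled[OF ukL hL] by simp
  then have "(norm (S (\<lambda>x. u k x + t * h x) - \<zeta>))\<^sup>2 = N + 2 * t * inner (S (u k) - \<zeta>) (S h) + t\<^sup>2 * (norm (S h))\<^sup>2"
    unfolding N_def by (simp only: norm_add_scaleR_power2)
  then have "breg_obj \<Omega> S Sadj \<alpha> \<zeta> u k (\<lambda>x. u k x + t * h x)
      = (1/2) * (N + 2 * t * inner (S (u k) - \<zeta>) (S h) + t\<^sup>2 * (norm (S h))\<^sup>2)
        + \<alpha> k * ((1/2) * (L + 2 * t * l2inner \<Omega> (u k) h + t\<^sup>2 * l2inner \<Omega> h h) - (1/2) * Lp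
          - (I + t * l2inner \<Omega> h lam))"
    unfolding breg_obj_def lam_def[symmetric] lam_lin l2norm_power2 L_def Lp_def
      l2inner_self_add_scaled[OF ukL hL] by simp
  ultimately show ?thesis
    unfolding lam_def[symmetric] by (simp add: algebra_simps)
qed

lemma bregman_step_variational_ineq:
  assumes "k \<ge> 1" and "\<alpha> k > 0" and uk: "u k \<in> Uad \<Omega> ua ub"
    and min: "\<forall>v\<in>Uad \<Omega> ua ub. breg_obj \<Omega> S Sadj \<alpha> \<zeta> u k (u k) \<le> breg_obj \<Omega> S Sadj \<alpha> \<zeta> u k v"
    and prev: "k \<ge> 2 \<Longrightarrow> u (k - 1) \<in> L2 \<Omega>"
    and v: "v \<in> Uad \<Omega> ua ub"
  shows "inner (S (\<lambda>x. v x - u k x)) (breg_residual_sum S \<alpha> \<zeta> u k) \<le> l2inner \<Omega> (u k) (\<lambda>x. v x - u k x)"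
proof -
  define h where "h = (\<lambda>x. v x - u k x)"
  have ukL: "u k \<in> L2 \<Omega>" and hL: "h \<in> L2 \<Omega>"
    using uk v unfolding h_def by (auto intro: Uad_L2 L2_diff)
  define a where "a = inner (S (u k) - \<zeta>) (S h)"
  define ip where "ip = l2inner \<Omega> (u k) h"
  define lh where "lh = l2inner \<Omega> h (breg_lambda S Sadj \<alpha> \<zeta> u (k - 1))"
  define A where "A = a + \<alpha> k * (ip - lh)"
  define B where "B = (1/2) * (norm (S h))\<^sup>2 + \<alpha> k * ((1/2) * l2inner \<Omega> h h)"
  have expand: "breg_obj \<Omega> S Sadj \<alpha> \<zeta> u k (\<lambda>x. u k x + t * h x)
      = breg_obj \<Omega> S Sadj \<alpha> \<zeta> u k (u k) + t * A + t\<^sup>2 * B" for t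
    unfolding A_def B_def a_def ip_def lh_def by (rule breg_obj_add_scaled) (use ukL hL prev in auto)
  have "0 \<le> t * A + t\<^sup>2 * B" if t: "0 < t" "t \<le> 1" for t
  proof -
    have "(\<lambda>x. u k x + t * h x) \<in> Uad \<Omega> ua ub"
      unfolding h_def using Uad_convex[OF uk v] t by simp
    then show ?thesis
      using min expand[of t] by fastforce
  qed
  moreover have "0 \<le> B" unfolding B_def using \<open>\<alpha> k > 0\<close> l2inner_self_nonneg[of \<Omega> h] by simp
  ultimately have "0 \<le> A" by (rule nonneg_if_small_quadratic_nonneg)
  obtain m where k: "k = Suc m" using \<open>k \<ge> 1\<close> by (cases k) auto
  have "inner (S h) (breg_residual_sum S \<alpha> \<zeta> u k) = lh - a / \<alpha> k"
    unfolding lh_def a_def l2inner_breg_lambda[OF hL] k breg_residual_sum_Suc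
    by (simp add: inner_add_right inner_diff_right inner_commute diff_divide_distrib)
  then have "\<alpha> k * inner (S h) (breg_residual_sum S \<alpha> \<zeta> u k) = \<alpha> k * lh - a"
    using \<open>\<alpha> k > 0\<close> by (simp add: field_simps)
  moreover have "\<alpha> k * lh \<le> a + \<alpha> k * ip"
    using \<open>0 \<le> A\<close> unfolding A_def by (simp add: algebra_simps)
  ultimately have "\<alpha> k * inner (S h) (breg_residual_sum S \<alpha> \<zeta> u k) \<le> \<alpha> k * ip"
    by linarith
  then show ?thesis
    unfolding h_def ip_def using \<open>\<alpha> k > 0\<close> by simp
qed

lemma bregman_step_error_bound:
  assumes "i \<ge> 1" and "\<alpha> i > 0"
    and ui: "u i \<in> Uad \<Omega> ua ub" and uz: "uz \<in> Uad \<Omega> ua ub"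
    and vi: "inner (S (\<lambda>x. uz x - u i x)) (breg_residual_sum S \<alpha> \<zeta> u i)
      \<le> l2inner \<Omega> (u i) (\<lambda>x. uz x - u i x)"
    and est: "gam \<alpha> i * l2inner \<Omega> (\<lambda>x. u i x - uz x) (Sadj (z - S uz))
      - l2inner \<Omega> (\<lambda>x. u i x - uz x) (\<lambda>x. uz x - Sadj w x) \<le> K * gam \<alpha> i powr (-\<kappa>)"
  shows "(1 / \<alpha> i) * (l2norm \<Omega> (\<lambda>x. uz x - u i x))\<^sup>2
    \<le> K * ((1 / \<alpha> i) * gam \<alpha> i powr (-\<kappa>))
      + inner (breg_image_error_sum S \<alpha> u uz i - breg_image_error_sum S \<alpha> u uz (i - 1))
          (gam \<alpha> i *\<^sub>R (\<zeta> - z) - breg_image_error_sum S \<alpha> u uz i - w)"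
proof -
  define e where "e = (\<lambda>x. u i x - uz x)"
  define g where "g = (\<lambda>x. uz x - Sadj w x)"
  define s where "s = breg_image_error_sum S \<alpha> u uz i"
  have uiL: "u i \<in> L2 \<Omega>" and uzL: "uz \<in> L2 \<Omega>" using ui uz by (auto intro: Uad_L2)
  have eL: "e \<in> L2 \<Omega>" and gL: "g \<in> L2 \<Omega>"
    unfolding e_def g_def using uiL uzL Sadj_L2 by (auto intro: L2_diff)
  have Se: "S e = S (u i) - S uz" unfolding e_def using S_diff[OF uiL uzL] .
  have norm_e: "(l2norm \<Omega> (\<lambda>x. uz x - u i x))\<^sup>2 = l2inner \<Omega> (u i) e - l2inner \<Omega> uz e"
    unfolding l2norm_power2 l2inner_diff_left[OF uiL uzL eL, symmetric]
    unfolding l2inner_def e_def by (simp add: algebra_simps)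
  have "(\<lambda>x. u i x * (uz x - u i x)) = (\<lambda>x. - (u i x * e x))"
    unfolding e_def by (simp add: fun_eq_iff algebra_simps)
  then have "l2inner \<Omega> (u i) (\<lambda>x. uz x - u i x) = - l2inner \<Omega> (u i) e"
    unfolding l2inner_def by simp
  then have vi': "l2inner \<Omega> (u i) e \<le> inner (S e) (breg_residual_sum S \<alpha> \<zeta> u i)"
    using vi S_diff[OF uzL uiL] unfolding Se by (simp add: inner_diff_left)
  have "l2inner \<Omega> uz e = l2inner \<Omega> (\<lambda>x. Sadj w x + 1 * g x) e" unfolding g_def by simp
  also have "\<dots> = l2inner \<Omega> (Sadj w) e + 1 * l2inner \<Omega> g e"
    by (rule l2inner_add_scaled_left[OF Sadj_L2 gL eL])
  also have "\<dots> = inner (S e) w + l2inner \<Omega> e g"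
    using Sadj_adj[OF eL] by (simp add: l2inner_commute)
  finally have source: "l2inner \<Omega> uz e = inner (S e) w + l2inner \<Omega> e g" .
  have "inner (S e) (breg_residual_sum S \<alpha> \<zeta> u i)
      = gam \<alpha> i * inner (S e) (\<zeta> - z) + gam \<alpha> i * l2inner \<Omega> e (Sadj (z - S uz)) - inner (S e) s"
    unfolding breg_residual_sum_decomp[of S \<alpha> \<zeta> u i z uz] Sadj_adj[OF eL] s_def
    by (simp add: inner_diff_right inner_add_right)
  then have "l2inner \<Omega> e e \<le> K * gam \<alpha> i powr (-\<kappa>) + inner (S e) (gam \<alpha> i *\<^sub>R (\<zeta> - z) - s - w)"
    using vi' source est l2inner_diff_left[OF uiL uzL eL] unfolding e_def[symmetric] g_def[symmetric]
    by (simp add: inner_diff_right)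
  moreover obtain m where i: "i = Suc m" using \<open>i \<ge> 1\<close> by (cases i) auto
  then have "S e = \<alpha> i *\<^sub>R (s - breg_image_error_sum S \<alpha> u uz (i - 1))"
    using \<open>\<alpha> i > 0\<close> unfolding s_def Se i by (simp add: breg_image_error_sum_Suc)
  ultimately have "l2inner \<Omega> e e \<le> K * gam \<alpha> i powr (-\<kappa>)
      + \<alpha> i * inner (s - breg_image_error_sum S \<alpha> u uz (i - 1)) (gam \<alpha> i *\<^sub>R (\<zeta> - z) - s - w)"
    by simp
  then have "(1 / \<alpha> i) * l2inner \<Omega> e e \<le> K * ((1 / \<alpha> i) * gam \<alpha> i powr (-\<kappa>))
      + inner (s - breg_image_error_sum S \<alpha> u uz (i - 1)) (gam \<alpha> i *\<^sub>R (\<zeta> - z) - s - w)"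
    using \<open>\<alpha> i > 0\<close> by (simp add: field_simps)
  moreover have "l2inner \<Omega> e e = (l2norm \<Omega> (\<lambda>x. uz x - u i x))\<^sup>2"
    using norm_e l2inner_diff_left[OF uiL uzL eL] unfolding e_def by simp
  ultimately show ?thesis unfolding s_def by simp
qed

lemma bregman_error_sum_bound:
  assumes pos: "\<And>k. k \<ge> 1 \<Longrightarrow> \<alpha> k > 0" and uz: "uz \<in> Uad \<Omega> ua ub"
    and breg: "bregman_seq \<Omega> S Sadj ua ub \<alpha> \<zeta> u" and noise: "norm (\<zeta> - z) \<le> \<delta>"
    and est: "\<And>v \<gamma>. v \<in> Uad \<Omega> ua ub \<Longrightarrow> \<gamma> > 0 \<Longrightarrow>
      \<gamma> * l2inner \<Omega> (\<lambda>x. v x - uz x) (Sadj (z - S uz)) - l2inner \<Omega> (\<lambda>x. v x - uz x) (\<lambda>x. uz x - Sadj w x)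
        \<le> K * \<gamma> powr (-\<kappa>)"
  shows "(\<Sum>i=1..k. (1 / \<alpha> i) * (l2norm \<Omega> (\<lambda>x. uz x - u i x))\<^sup>2)
    \<le> K * (e_reg \<alpha> \<kappa> k - 1) + e_noise \<alpha> \<delta> k + (1/2) * (norm w)\<^sup>2"
proof -
  have u: "\<And>i. i \<ge> 1 \<Longrightarrow> u i \<in> Uad \<Omega> ua ub"
    and min: "\<And>i. i \<ge> 1 \<Longrightarrow> \<forall>v\<in>Uad \<Omega> ua ub. breg_obj \<Omega> S Sadj \<alpha> \<zeta> u i (u i) \<le> breg_obj \<Omega> S Sadj \<alpha> \<zeta> u i v"
    using breg unfolding bregman_seq_def by blast+
  have "(\<Sum>i=1..k. (1 / \<alpha> i) * (l2norm \<Omega> (\<lambda>x. uz x - u i x))\<^sup>2)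
      \<le> (\<Sum>i=1..k. K * ((1 / \<alpha> i) * gam \<alpha> i powr (-\<kappa>))) + (1/2) * \<delta>\<^sup>2 * (\<Sum>i=1..k. (gam \<alpha> i)\<^sup>2)
        + (1/2) * (norm w)\<^sup>2"
  proof (rule telescoping_sum[where s="breg_image_error_sum S \<alpha> u uz" and g="gam \<alpha>"])
    fix i :: nat assume "i \<ge> 1"
    have prev: "u (i - 1) \<in> L2 \<Omega>" if "i \<ge> 2" using that by (intro Uad_L2[OF u]) simp
    have "inner (S (\<lambda>x. uz x - u i x)) (breg_residual_sum S \<alpha> \<zeta> u i)
        \<le> l2inner \<Omega> (u i) (\<lambda>x. uz x - u i x)"
      using \<open>i \<ge> 1\<close> by (intro bregman_step_variational_ineq[OF _ pos u min prev uz])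
    moreover have "gam \<alpha> i > 0" using pos \<open>i \<ge> 1\<close> by (rule gam_pos)
    ultimately show "(1 / \<alpha> i) * (l2norm \<Omega> (\<lambda>x. uz x - u i x))\<^sup>2
        \<le> K * ((1 / \<alpha> i) * gam \<alpha> i powr (-\<kappa>)) + inner (breg_image_error_sum S \<alpha> u uz i
          - breg_image_error_sum S \<alpha> u uz (i - 1)) (gam \<alpha> i *\<^sub>R (\<zeta> - z) - breg_image_error_sum S \<alpha> u uz i - w)"
      using \<open>i \<ge> 1\<close> pos u uz est by (intro bregman_step_error_bound) auto
  qed (use noise in \<open>auto simp: breg_image_error_sum_def\<close>)
  moreover have "(\<Sum>i=1..k. K * ((1 / \<alpha> i) * gam \<alpha> i powr (-\<kappa>))) = K * (e_reg \<alpha> \<kappa> k - 1)"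
    unfolding e_reg_def by (simp add: sum_distrib_left)
  ultimately show ?thesis using half_sum_gam_power2_le_e_noise[of \<delta> \<alpha> k] by linarith
qed

lemma weighted_error_sum_at_kstop:
  assumes pos: "\<And>k. k \<ge> 1 \<Longrightarrow> \<alpha> k > 0" and bdd: "\<And>k. k \<ge> 1 \<Longrightarrow> \<alpha> k \<le> C"
    and "\<kappa> > 0" "\<tau> > 0" "\<delta> > 0" "kstop \<alpha> \<kappa> \<tau> \<delta> \<ge> 1" "K \<ge> 0"
    and uz: "uz \<in> Uad \<Omega> ua ub"
    and breg: "bregman_seq \<Omega> S Sadj ua ub \<alpha> \<zeta> u" and noise: "norm (\<zeta> - z) \<le> \<delta>"
    and est: "\<And>v \<gamma>. v \<in> Uad \<Omega> ua ub \<Longrightarrow> \<gamma> > 0 \<Longrightarrow>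
      \<gamma> * l2inner \<Omega> (\<lambda>x. v x - uz x) (Sadj (z - S uz)) - l2inner \<Omega> (\<lambda>x. v x - uz x) (\<lambda>x. uz x - Sadj w x)
        \<le> K * \<gamma> powr (-\<kappa>)"
  shows "(\<Sum>i=1..kstop \<alpha> \<kappa> \<tau> \<delta>. (1 / \<alpha> i) * (l2norm \<Omega> (\<lambda>x. uz x - u i x))\<^sup>2)
    \<le> (K + \<tau> + (1/2) * (norm w)\<^sup>2) * e_reg \<alpha> \<kappa> (kstop \<alpha> \<kappa> \<tau> \<delta>)"
proof -
  let ?k = "kstop \<alpha> \<kappa> \<tau> \<delta>"
  have "(\<Sum>i=1..?k. (1 / \<alpha> i) * (l2norm \<Omega> (\<lambda>x. uz x - u i x))\<^sup>2)
      \<le> K * (e_reg \<alpha> \<kappa> ?k - 1) + e_noise \<alpha> \<delta> ?k + (1/2) * (norm w)\<^sup>2"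
    using pos uz breg noise est by (rule bregman_error_sum_bound)
  moreover have "e_noise \<alpha> \<delta> ?k \<le> \<tau> * e_reg \<alpha> \<kappa> ?k"
    using pos bdd assms(3-6) by (intro e_noise_kstop_le) auto
  moreover have "(1/2) * (norm w)\<^sup>2 * 1 \<le> (1/2) * (norm w)\<^sup>2 * e_reg \<alpha> \<kappa> ?k"
    using e_reg_ge_1[of \<alpha> \<kappa> ?k] pos by (intro mult_left_mono) auto
  ultimately show ?thesis using \<open>K \<ge> 0\<close> by (simp add: algebra_simps)
qed

end

theorem mainTheorem3:
  fixes \<Omega> :: "'a::euclidean_space set"
    and S :: "('a \<Rightarrow> real) \<Rightarrow> 'y::{real_inner, complete_space}"
    and Sadj :: "'y \<Rightarrow> 'a \<Rightarrow> real"
    and ua ub udag :: "'a \<Rightarrow> real"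
    and z :: 'y
    and \<alpha> :: "nat \<Rightarrow> real"
    and \<kappa> \<tau> :: real
    and zd :: "real \<Rightarrow> 'y"
    and ud :: "real \<Rightarrow> nat \<Rightarrow> 'a \<Rightarrow> real"
  assumes \<Omega>_meas: "\<Omega> \<in> sets lebesgue" and \<Omega>_bdd: "bounded \<Omega>"
    and S_add: "\<And>u v. u \<in> L2 \<Omega> \<Longrightarrow> v \<in> L2 \<Omega> \<Longrightarrow> S (\<lambda>x. u x + v x) = S u + S v"
    and S_scale: "\<And>c u. u \<in> L2 \<Omega> \<Longrightarrow> S (\<lambda>x. c * u x) = c *\<^sub>R S u"
    and S_bdd: "\<exists>C. \<forall>u \<in> L2 \<Omega>. norm (S u) \<le> C * l2norm \<Omega> u"
    and Sadj_L2: "\<And>w. Sadj w \<in> L2 \<Omega>"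
    and Sadj_adj: "\<And>w u. u \<in> L2 \<Omega> \<Longrightarrow> l2inner \<Omega> u (Sadj w) = inner (S u) w"
    and ua_inf: "ua \<in> Linf \<Omega>" and ub_inf: "ub \<in> Linf \<Omega>"
    and Uad_ne: "Uad \<Omega> ua ub \<noteq> {}"
    and \<alpha>_pos: "\<And>k. k \<ge> 1 \<Longrightarrow> \<alpha> k > 0"
    and \<alpha>_bdd: "\<exists>C. \<forall>k\<ge>1. \<alpha> k \<le> C"
    and udag_sol: "udag \<in> Uad \<Omega> ua ub"
      "\<And>v. v \<in> Uad \<Omega> ua ub \<Longrightarrow> (1/2) * (norm (S udag - z))\<^sup>2 \<le> (1/2) * (norm (S v - z))\<^sup>2"
    and \<kappa>_pos: "\<kappa> > 0"
    and ASC: "active_set_condition \<Omega> S Sadj ua ub z udag \<kappa>"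
    and \<tau>_pos: "\<tau> > 0"
    and zd_close: "\<And>\<delta>. \<delta> > 0 \<Longrightarrow> norm (z - zd \<delta>) \<le> \<delta>"
    and ud_breg: "\<And>\<delta>. \<delta> > 0 \<Longrightarrow> bregman_seq \<Omega> S Sadj ua ub \<alpha> (zd \<delta>) (ud \<delta>)"
  shows "((\<lambda>\<delta>. Min ((\<lambda>j. l2norm \<Omega> (\<lambda>x. udag x - ud \<delta> j x)) ` {1..kstop \<alpha> \<kappa> \<tau> \<delta>}))
           \<longlongrightarrow> 0) (at_right 0)"
proof -
  interpret L2_adjoint_pair \<Omega> S Sadj
    using bounded_set_imp_lmeasurable[OF \<Omega>_bdd \<Omega>_meas] S_add S_scale Sadj_L2 Sadj_adj
    by unfold_locales auto
  obtain C where C: "\<And>k. k \<ge> 1 \<Longrightarrow> \<alpha> k \<le> C" using \<alpha>_bdd by blast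
  obtain K w where "K \<ge> 0" and est: "\<And>u \<gamma>. u \<in> Uad \<Omega> ua ub \<Longrightarrow> \<gamma> > 0 \<Longrightarrow>
      \<gamma> * l2inner \<Omega> (\<lambda>x. u x - udag x) (Sadj (z - S udag))
        - l2inner \<Omega> (\<lambda>x. u x - udag x) (\<lambda>x. udag x - Sadj w x) \<le> K * \<gamma> powr (-\<kappa>)"
    by (rule active_set_condition_estimate[OF ua_inf ub_inf udag_sol ASC]) (assumption | rule that)+
  have kstop: "filterlim (kstop \<alpha> \<kappa> \<tau>) at_top (at_right 0)"
    using \<alpha>_pos C \<kappa>_pos \<tau>_pos by (intro kstop_at_top) auto
  have "\<forall>\<^sub>F \<delta> in at_right 0. 0 < \<delta> \<and> 1 \<le> kstop \<alpha> \<kappa> \<tau> \<delta>"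
    using kstop by (simp add: eventually_at_right_less filterlim_at_top eventually_conj)
  then have "\<forall>\<^sub>F \<delta> in at_right 0. (\<Sum>i=1..kstop \<alpha> \<kappa> \<tau> \<delta>. (1 / \<alpha> i) * (l2norm \<Omega> (\<lambda>x. udag x - ud \<delta> i x))\<^sup>2)
      \<le> (K + \<tau> + (1/2) * (norm w)\<^sup>2) * e_reg \<alpha> \<kappa> (kstop \<alpha> \<kappa> \<tau> \<delta>)"
    by (elim eventually_mono, intro weighted_error_sum_at_kstop[OF \<alpha>_pos C \<kappa>_pos \<tau>_pos _ _ \<open>K \<ge> 0\<close>
          udag_sol(1) ud_breg _ est]) (auto simp: zd_close norm_minus_commute)
  then show ?thesis
    using \<alpha>_pos C \<kappa>_pos kstop by (intro Min_tendsto_0_if_weighted_sum_bound) (auto simp: l2norm_nonneg)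
qed

end
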